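(* Let $T_0\subset\mathbb{R}^n$ be a bounded open set with finite perimeter $P(T_0)<\infty$, let $\lambda>1$ and $a,b\in\mathbb{N}$, and for $k\in\mathbb{N}$, $1\leq i\leq ab^{k-1}$ let $F_k^i(x):=\mathcal R_k^i(\lambda^{-k}x)+x_k^i$ with $\mathcal R_k^i\in SO(n)$, $x_k^i\in\mathbb{R}^n$. Set $T_k^i:=F_k^i(T_0)$ and assume $|T_k^i\cap T_h^j|=0$ whenever $(k,i)\neq(h,j)$. Let \[ T:=\bigcup_{k=1}^\infty\bigcup_{i=1}^{ab^{k-1}}T_k^i. \] Assume $\frac{\log b}{\log\lambda}\in(n-1,n)$ and that there exists $S_0\subset\mathbb{R}^n\setminus T$ with $|S_0|>0$ and $F_k^i(S_0)\subset\mathbb{R}^n\setminus T$ for all $k,i$. Then \[ P_s(T)<\infty\quad\forall\,s\in\Big(0,n-\frac{\log b}{\log\lambda}\Big),\qquad P_s(T)=\infty\quad\forall\,s\in\Big[n-\frac{\log b}{\log\lambda},1\Big). \] Thus $\mathrm{Dim}_F(\partial^-T)=\frac{\log b}{\log\lambda}$.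
   Context: $P(T_0)=|D\chi_{T_0}|(\mathbb{R}^n)$ is the classical perimeter. For $s\in(0,1)$, $P_s(E):=\int_E\int_{\mathbb{R}^n\setminus E}|x-y|^{-n-s}dx\,dy$. $\partial^-E:=\{x: 0<|E\cap B_r(x)|<\omega_nr^n\ \forall r>0\}$, and $\mathrm{Dim}_F(\partial^-E):=n-\sup\{s\in(0,1):P_s(E)<\infty\}$. *)

theory Defs
  imports "HOL-Analysis.Analysis"
begin

definition admissible_field :: "('a::euclidean_space \<Rightarrow> 'a) \<Rightarrow> bool" where
  "admissible_field \<phi> \<longleftrightarrow>
     (\<forall>x. \<phi> differentiable (at x)) \<and>
     (\<forall>i\<in>Basis. continuous_on UNIV (\<lambda>x. frechet_derivative \<phi> (at x) i)) \<and>
     compact (closure {x. \<phi> x \<noteq> 0}) \<and>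
     (\<forall>x. norm (\<phi> x) \<le> 1)"

definition divergence :: "('a::euclidean_space \<Rightarrow> 'a) \<Rightarrow> 'a \<Rightarrow> real" where
  "divergence \<phi> x = (\<Sum>i\<in>Basis. frechet_derivative \<phi> (at x) i \<bullet> i)"

text \<open>Classical (De Giorgi) perimeter: total variation of the distributional gradient
of the characteristic function, |D chi_E|(R^n).\<close>
definition perimeter :: "'a::euclidean_space set \<Rightarrow> ereal" where
  "perimeter E = (SUP \<phi> \<in> {\<phi>. admissible_field \<phi>}.
                    ereal (LINT x:E|lborel. divergence \<phi> x))"

definition frac_perimeter :: "real \<Rightarrow> 'a::euclidean_space set \<Rightarrow> ennreal" where
  "frac_perimeter s E =
     (\<integral>\<^sup>+ x. indicator E x *
        (\<integral>\<^sup>+ y. indicator (- E) y * ennreal (dist x y powr (- (real DIM('a) + s))) \<partial>lborel)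
      \<partial>lborel)"

text \<open>Fractal dimension of the measure theoretic boundary of E:
Dim_F(boundary^- E) = n - sup {s in (0,1). P_s(E) < infinity}.\<close>
definition frac_dim :: "'a::euclidean_space set \<Rightarrow> real" where
  "frac_dim E = real DIM('a) - Sup {s. 0 < s \<and> s < 1 \<and> frac_perimeter s E < \<infinity>}"

end

theory Submission
  imports Defs
begin

text \<open>Each piece \<open>T_k^i\<close> is the image of \<open>T\<^sub>0\<close> under a similarity of ratio \<open>\<lambda>^(-k)\<close>,
  and the \<open>s\<close>-interaction of two sets scales by \<open>\<lambda>^(-k(n - s))\<close> under such a map. As there are
  \<open>a b^(k - 1)\<close> pieces of generation \<open>k\<close>, everything is governed by the series
  \<open>\<Sum>\<^sub>k a b^(k - 1) \<lambda>^(-k(n - s))\<close>, which converges iff \<open>s < n - log b / log \<lambda>\<close>.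
  Subadditivity bounds \<open>P\<^sub>s(T)\<close> by the series times \<open>P\<^sub>s(T\<^sub>0)\<close>, and \<open>P\<^sub>s(T\<^sub>0) < \<infinity>\<close> because a set
  of finite perimeter satisfies \<open>|E \<inter> (-E - h)| \<le> |h| P(E)\<close>. Conversely each piece interacts
  with its own copy of the hole \<open>S\<^sub>0\<close>, and the pieces are essentially disjoint, so \<open>P\<^sub>s(T)\<close> is
  at least the series times \<open>L(T\<^sub>0, S\<^sub>0) > 0\<close>.\<close>

section \<open>Similarities and Lebesgue measure\<close>

lemma open_Vitali_ball_decomposition:
  fixes U :: "'a::euclidean_space set"
  assumes U: "open U"
  obtains C where "countable C" "\<And>i. i \<in> C \<Longrightarrow> snd i > 0 \<and> ball (fst i) (snd i) \<subseteq> U"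
    "disjoint_family_on (\<lambda>i. ball (fst i) (snd i)) C"
    "U - (\<Union>i\<in>C. ball (fst i) (snd i)) \<in> null_sets lborel"
proof -
  let ?K = "{(c::'a, r::real). r > 0 \<and> ball c r \<subseteq> U}"
  obtain C where C: "countable C" "C \<subseteq> ?K"
     and pw: "pairwise (\<lambda>i j. disjnt (ball (fst i) (snd i)) (ball (fst j) (snd j))) C"
     and neg: "negligible (U - (\<Union>i \<in> C. ball (fst i) (snd i)))"
  proof (rule Vitali_covering_theorem_balls[of U ?K fst snd])
    fix x d assume "x \<in> U" "(0::real) < d"
    then obtain e where e: "e > 0" "ball x e \<subseteq> U" using U open_contains_ball by blast
    show "\<exists>i. i \<in> ?K \<and> x \<in> ball (fst i) (snd i) \<and> snd i < d"
      by (rule exI[of _ "(x, min e (d/2))"]) (use e \<open>0<d\<close> in auto)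
  qed
  have "(\<Union>i \<in> C. ball (fst i) (snd i)) \<in> sets borel" using C(1) by (intro sets.countable_UN'') auto
  then have "U - (\<Union>i\<in>C. ball (fst i) (snd i)) \<in> null_sets lborel"
    using neg U by (simp add: negligible_iff_null_sets null_sets_completion_iff)
  moreover have "disjoint_family_on (\<lambda>i. ball (fst i) (snd i)) C"
    using pw unfolding disjoint_family_on_def pairwise_def disjnt_def by blast
  moreover have "snd i > 0 \<and> ball (fst i) (snd i) \<subseteq> U" if "i \<in> C" for i
    using subsetD[OF C(2) that] by (cases i) auto
  ultimately show ?thesis using that[OF C(1)] by blast
qed

lemma emeasure_lborel_UN_disjoint_balls:
  fixes c :: "'i \<Rightarrow> 'a::euclidean_space"
  assumes "countable C" "disjoint_family_on (\<lambda>i. ball (c i) (r i)) C" "\<And>i. i \<in> C \<Longrightarrow> r i > 0"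
  shows "emeasure lborel (\<Union>i\<in>C. ball (c i) (r i))
    = (\<integral>\<^sup>+i. ennreal (unit_ball_vol (real DIM('a)) * r i ^ DIM('a)) \<partial>count_space C)"
  using assms
  by (subst emeasure_UN_countable) (auto intro!: nn_integral_cong simp: emeasure_ball less_imp_le)

lemma emeasure_lborel_isometry_image_open:
  fixes g :: "'a::euclidean_space \<Rightarrow> 'a"
  assumes lin: "linear g" and iso: "\<And>x. norm (g x) = norm x"
    and linh: "linear h" and hg: "\<And>x. h (g x) = x" and gh: "\<And>x. g (h x) = x"
    and U: "open U"
  shows "emeasure lborel (g ` U) = emeasure lborel U"
proof -
  obtain C where C: "countable C" "\<And>i. i \<in> C \<Longrightarrow> snd i > 0 \<and> ball (fst i) (snd i) \<subseteq> U"
    and disj: "disjoint_family_on (\<lambda>i. ball (fst i) (snd i)) C"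
    and N: "U - (\<Union>i\<in>C. ball (fst i) (snd i)) \<in> null_sets lborel"
    using open_Vitali_ball_decomposition[OF U] by blast
  define B where "B = (\<Union>i\<in>C. ball (fst i) (snd i))"
  have Bm: "B \<in> sets borel" unfolding B_def using C(1) by (intro sets.countable_UN'') auto
  have N: "U - B \<in> null_sets lborel" using N by (simp add: B_def)
  have UBN: "U = B \<union> (U - B)" using C(2) by (auto simp: B_def)
  have dist_g: "dist (g x) (g y) = dist x y" for x y
    by (metis dist_norm iso lin linear_diff)
  have gball: "g ` ball c r = ball (g c) r" for c r
  proof
    show "g ` ball c r \<subseteq> ball (g c) r" using dist_g by auto
    show "ball (g c) r \<subseteq> g ` ball c r"
      using dist_g gh by (metis image_eqI mem_ball subsetI)
  qed
  have inj: "inj g" by (metis hg injI)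
  have gB: "g ` B = (\<Union>i\<in>C. ball (g (fst i)) (snd i))"
    unfolding B_def image_UN gball ..
  have gBm: "g ` B \<in> sets borel" unfolding gB using C(1) by (intro sets.countable_UN'') auto
  have gN: "g ` (U - B) \<in> null_sets lborel"
  proof -
    have "negligible (U - B)"
      using N U Bm by (simp add: negligible_iff_null_sets null_sets_completion_iff)
    then have "negligible (g ` (U - B))"
      using lin by (intro negligible_differentiable_image_negligible)
        (auto simp: linear_imp_differentiable_on)
    moreover have "g ` U = h -` U"
    proof
      show "g ` U \<subseteq> h -` U" using hg by auto
      show "h -` U \<subseteq> g ` U" using gh by (metis image_eqI subsetI vimageE)
    qed
    then have "open (g ` U)"
      using linh U by (auto intro!: open_vimage linear_continuous_on simp: linear_linear)
    ultimately show ?thesis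
      using inj gBm by (simp add: image_set_diff negligible_iff_null_sets null_sets_completion_iff)
  qed
  have "disjoint_family_on (\<lambda>i. ball (g (fst i)) (snd i)) C"
    using disj inj unfolding disjoint_family_on_def gball[symmetric] by (metis image_empty image_Int)
  then have "emeasure lborel (\<Union>i\<in>C. ball (g (fst i)) (snd i)) = emeasure lborel B"
    unfolding B_def using C disj by (simp add: emeasure_lborel_UN_disjoint_balls)
  then have gBB: "emeasure lborel (g ` B) = emeasure lborel B" by (simp only: gB)
  have "emeasure lborel (g ` B \<union> g ` (U - B)) = emeasure lborel (g ` B)"
    using gBm gN by (simp add: emeasure_Un_null_set)
  moreover have "emeasure lborel (B \<union> (U - B)) = emeasure lborel B"
    using emeasure_Un_null_set[of B lborel "U - B"] Bm N by simp
  ultimately show ?thesis using gBB by (simp only: image_Un[symmetric] UBN[symmetric])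
qed

text \<open>Boxes are open, so the previous lemma identifies the image measure with \<open>lborel\<close>
  on a generating family.\<close>
lemma distr_lborel_isometry:
  fixes g :: "'a::euclidean_space \<Rightarrow> 'a"
  assumes lin: "linear g" and iso: "\<And>x. norm (g x) = norm x"
    and linh: "linear h" and hg: "\<And>x. h (g x) = x" and gh: "\<And>x. g (h x) = x"
  shows "distr lborel borel g = lborel"
proof (rule lborel_eqI[symmetric])
  fix l u :: 'a assume le: "\<And>b. b \<in> Basis \<Longrightarrow> l \<bullet> b \<le> u \<bullet> b"
  have gm: "g \<in> borel_measurable borel"
    using lin by (intro borel_measurable_continuous_onI linear_continuous_on) (simp add: linear_linear)
  have isoh: "norm (h x) = norm x" for x by (metis gh iso)
  have eq: "g -` box l u = h ` box l u"
  proof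
    show "g -` box l u \<subseteq> h ` box l u" using hg by (metis image_eqI subsetI vimageE)
    show "h ` box l u \<subseteq> g -` box l u" using gh by auto
  qed
  have "emeasure (distr lborel borel g) (box l u) = emeasure lborel (g -` box l u)"
    using gm by (subst emeasure_distr) auto
  also have "\<dots> = emeasure lborel (box l u)"
    unfolding eq by (rule emeasure_lborel_isometry_image_open[OF linh isoh lin gh hg]) (simp add: open_box)
  also have "\<dots> = (\<Prod>b\<in>Basis. (u - l) \<bullet> b)"
    using le by (simp add: emeasure_lborel_box_eq)
  finally show "emeasure (distr lborel borel g) (box l u) = (\<Prod>b\<in>Basis. (u - l) \<bullet> b)" .
qed simp

lemma orthogonal_matrix_norm:
  fixes R :: "real^'n^'n"
  assumes "orthogonal_matrix R"
  shows "norm (R *v x) = norm x"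
proof -
  have "orthogonal_transformation ((*v) R)"
    using assms by (simp add: orthogonal_transformation_matrix matrix_vector_mul_linear)
  then show ?thesis by (simp add: orthogonal_transformation)
qed

lemma orthogonal_matrix_transpose_mult_cancel:
  fixes R :: "real^'n^'n"
  assumes "orthogonal_matrix R"
  shows "transpose R *v (R *v x) = x" and "R *v (transpose R *v x) = x"
  using assms by (metis matrix_vector_mul_assoc matrix_vector_mul_lid orthogonal_matrix_def)+

lemma nn_integral_orthogonal_matrix:
  fixes f :: "real^'n \<Rightarrow> ennreal" and R :: "real^'n^'n"
  assumes f[measurable]: "f \<in> borel_measurable borel" and R: "orthogonal_matrix R"
  shows "(\<integral>\<^sup>+x. f (R *v x) \<partial>lborel) = (\<integral>\<^sup>+x. f x \<partial>lborel)"
proof -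
  have gm: "(*v) R \<in> borel_measurable borel"
    by (intro borel_measurable_continuous_onI linear_continuous_on)
       (simp add: linear_linear matrix_vector_mul_linear)
  have "(\<integral>\<^sup>+x. f x \<partial>lborel) = (\<integral>\<^sup>+x. f x \<partial>distr lborel borel ((*v) R))"
    using distr_lborel_isometry[OF matrix_vector_mul_linear orthogonal_matrix_norm[OF R]
        matrix_vector_mul_linear orthogonal_matrix_transpose_mult_cancel[OF R]]
    by simp
  also have "\<dots> = (\<integral>\<^sup>+x. f (R *v x) \<partial>lborel)"
    using gm by (subst nn_integral_distr) auto
  finally show ?thesis ..
qed

lemma nn_integral_lborel_translate:
  fixes f :: "'a::euclidean_space \<Rightarrow> ennreal"
  assumes f[measurable]: "f \<in> borel_measurable borel"
  shows "(\<integral>\<^sup>+x. f (x + t) \<partial>lborel) = (\<integral>\<^sup>+x. f x \<partial>lborel)"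
proof -
  have "distr lborel borel (\<lambda>x. t + x) = (lborel::'a measure)"
    using lborel_affine[of 1 t] by (simp add: density_1)
  then have "(\<integral>\<^sup>+x. f x \<partial>lborel) = (\<integral>\<^sup>+x. f x \<partial>distr lborel borel (\<lambda>x. t + x))" by simp
  also have "\<dots> = (\<integral>\<^sup>+x. f (t + x) \<partial>lborel)" by (subst nn_integral_distr) auto
  finally show ?thesis by (simp add: add.commute)
qed

definition similarity :: "real^'n^'n \<Rightarrow> real \<Rightarrow> real^'n \<Rightarrow> real^'n \<Rightarrow> real^'n" where
  "similarity R c t x = R *v (c *\<^sub>R x) + t"

lemma nn_integral_similarity:
  fixes f :: "real^'n \<Rightarrow> ennreal" and R :: "real^'n^'n"
  assumes f[measurable]: "f \<in> borel_measurable borel" and R: "orthogonal_matrix R" and c: "c > 0"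
  shows "(\<integral>\<^sup>+x. f x \<partial>lborel) = ennreal (c ^ CARD('n)) * (\<integral>\<^sup>+x. f (similarity R c t x) \<partial>lborel)"
proof -
  have [measurable]: "(*v) R \<in> borel_measurable borel"
    by (intro borel_measurable_continuous_onI linear_continuous_on)
       (simp add: linear_linear matrix_vector_mul_linear)
  have "(\<integral>\<^sup>+x. f x \<partial>lborel) = (\<integral>\<^sup>+x. f (R *v x + t) \<partial>lborel)"
    using nn_integral_orthogonal_matrix[OF _ R, of "\<lambda>x. f (x + t)"]
      nn_integral_lborel_translate[OF f, of t] by simp
  also have "\<dots> = ennreal (c ^ CARD('n)) * (\<integral>\<^sup>+x. f (R *v (c *\<^sub>R x) + t) \<partial>lborel)"
    using c by (subst lborel_affine[of c 0])
      (auto simp: nn_integral_density nn_integral_distr nn_integral_cmult)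
  finally show ?thesis by (simp add: similarity_def)
qed

definition frac_interaction :: "real \<Rightarrow> 'a::euclidean_space set \<Rightarrow> 'a set \<Rightarrow> ennreal" where
  "frac_interaction s A B = (\<integral>\<^sup>+ x. indicator A x *
        (\<integral>\<^sup>+ y. indicator B y * ennreal (dist x y powr (- (real DIM('a) + s))) \<partial>lborel) \<partial>lborel)"

lemma frac_perimeter_eq_interaction: "frac_perimeter s E = frac_interaction s E (- E)"
  by (simp add: frac_perimeter_def frac_interaction_def)

context
  fixes R :: "real^'n^'n" and c :: real and t :: "real^'n"
  assumes R: "orthogonal_matrix R" and c: "c > 0"
begin

lemma dist_similarity: "dist (similarity R c t x) (similarity R c t y) = c * dist x y"
proof -
  have "similarity R c t x - similarity R c t y = R *v (c *\<^sub>R (x - y))"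
    unfolding similarity_def
    by (metis matrix_vector_mul_linear add_diff_cancel_right linear_diff scaleR_right_diff_distrib)
  then show ?thesis using c by (simp add: dist_norm orthogonal_matrix_norm[OF R])
qed

lemma inj_similarity: "inj (similarity R c t)"
  by (rule injI) (metis dist_similarity c dist_eq_0_iff mult_eq_0_iff less_irrefl)

lemma image_similarity_eq_vimage:
  "similarity R c t ` B = (\<lambda>z. (1/c) *\<^sub>R (transpose R *v (z - t))) -` B"
proof -
  note inv = orthogonal_matrix_transpose_mult_cancel[OF R]
  have "(1/c) *\<^sub>R (transpose R *v (similarity R c t x - t)) = x" for x
    using c inv(1) by (simp add: similarity_def del: transpose_matrix_vector)
  moreover have "similarity R c t ((1/c) *\<^sub>R (transpose R *v (z - t))) = z" for z
    using c inv(2) by (simp add: similarity_def del: transpose_matrix_vector)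
  ultimately show ?thesis
    by (intro equalityI subsetI) (auto, metis image_eqI)
qed

lemma Compl_image_similarity: "- (similarity R c t ` B) = similarity R c t ` (- B)"
  unfolding image_similarity_eq_vimage by auto

lemma similarity_borel_measurable: "similarity R c t \<in> borel_measurable borel"
proof -
  have bl: "bounded_linear ((*v) R)" by (simp add: linear_linear[symmetric] matrix_vector_mul_linear)
  show ?thesis unfolding similarity_def[abs_def]
    by (intro borel_measurable_continuous_onI continuous_intros bounded_linear.continuous_on[OF bl])
qed

lemma sets_image_similarity:
  assumes "B \<in> sets borel"
  shows "similarity R c t ` B \<in> sets borel"
proof -
  have bl: "bounded_linear ((*v) (transpose R))"
    by (simp add: linear_linear[symmetric] matrix_vector_mul_linear)
  have "(\<lambda>z. (1/c) *\<^sub>R (transpose R *v (z - t))) \<in> borel_measurable borel"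
    by (intro borel_measurable_continuous_onI continuous_intros
        continuous_on_compose2[OF bounded_linear.continuous_on[OF bl, of UNIV]]) auto
  from measurable_sets_borel[OF this assms] show ?thesis
    unfolding image_similarity_eq_vimage by simp
qed

lemma indicator_image_similarity [simp]:
  "indicator (similarity R c t ` X) (similarity R c t x) = (indicator X x :: ennreal)"
  using inj_similarity by (simp add: indicator_def inj_image_mem_iff)

lemma frac_interaction_image_similarity:
  assumes [measurable]: "A \<in> sets borel" "B \<in> sets borel"
  shows "frac_interaction s (similarity R c t ` A) (similarity R c t ` B)
    = ennreal (c powr (real CARD('n) - s)) * frac_interaction s A B"
proof -
  let ?G = "similarity R c t" and ?n = "real CARD('n)"
  let ?K = "\<lambda>x y. ennreal (dist x y powr (- (?n + s)))"
  have [measurable]: "?G ` A \<in> sets borel" "?G ` B \<in> sets borel"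
    by (simp_all add: sets_image_similarity)
  have [measurable]: "?G \<in> borel_measurable borel" by (rule similarity_borel_measurable)
  have K: "ennreal (dist (?G x) (?G y) powr (- ?n - s))
      = ennreal (c powr (- ?n - s)) * ennreal (dist x y powr (- ?n - s))" for x y
    using c by (simp add: dist_similarity powr_mult ennreal_mult[symmetric])
  have inner: "(\<integral>\<^sup>+ y. indicator (?G ` B) y * ?K x y \<partial>lborel)
     = ennreal (c ^ CARD('n)) * (\<integral>\<^sup>+ y. indicator B y * ?K x (?G y) \<partial>lborel)" for x
    by (subst nn_integral_similarity[OF _ R c, of _ t]) auto
  have inner': "(\<integral>\<^sup>+ y. indicator B y * ennreal (dist (?G x) (?G y) powr (- ?n - s)) \<partial>lborel)
     = ennreal (c powr (- ?n - s)) * (\<integral>\<^sup>+ y. indicator B y * ennreal (dist x y powr (- ?n - s)) \<partial>lborel)"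
    for x
    unfolding K by (subst nn_integral_cmult[symmetric]) (auto intro!: nn_integral_cong simp: mult_ac)
  have "frac_interaction s (?G ` A) (?G ` B) = (\<integral>\<^sup>+ x. indicator (?G ` A) x * (ennreal (c ^ CARD('n)) *
      (\<integral>\<^sup>+ y. indicator B y * ?K x (?G y) \<partial>lborel)) \<partial>lborel)"
    by (simp only: frac_interaction_def DIM_cart DIM_real mult.right_neutral inner)
  also have "\<dots> = ennreal (c ^ CARD('n)) * (\<integral>\<^sup>+ x. indicator A x * (ennreal (c ^ CARD('n)) *
      (\<integral>\<^sup>+ y. indicator B y * ?K (?G x) (?G y) \<partial>lborel)) \<partial>lborel)"
    by (subst nn_integral_similarity[OF _ R c, of _ t]) auto
  also have "\<dots> = ennreal (c ^ CARD('n)) * (\<integral>\<^sup>+ x. (ennreal (c ^ CARD('n)) * ennreal (c powr (- ?n - s)))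
      * (indicator A x * (\<integral>\<^sup>+ y. indicator B y * ?K x y \<partial>lborel)) \<partial>lborel)"
    by (simp add: inner' mult_ac)
  also have "\<dots> = ennreal (c ^ CARD('n)) * (ennreal (c ^ CARD('n)) * ennreal (c powr (- ?n - s)))
      * frac_interaction s A B"
    unfolding frac_interaction_def by (subst nn_integral_cmult) (auto simp: mult.assoc)
  also have "ennreal (c ^ CARD('n)) * (ennreal (c ^ CARD('n)) * ennreal (c powr (- ?n - s)))
      = ennreal (c powr (?n - s))"
    using c by (simp add: ennreal_mult[symmetric] powr_realpow[symmetric] powr_add[symmetric])
  finally show ?thesis .
qed

lemma frac_perimeter_image_similarity:
  assumes "E \<in> sets borel"
  shows "frac_perimeter s (similarity R c t ` E)
    = ennreal (c powr (real CARD('n) - s)) * frac_perimeter s E"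
  using frac_interaction_image_similarity[OF assms borel_comp[OF assms]]
  by (simp add: frac_perimeter_eq_interaction Compl_image_similarity)

end


lemma frac_perimeter_UN_le:
  fixes A :: "nat \<Rightarrow> 'i \<Rightarrow> 'a::euclidean_space set"
  assumes fin: "\<And>k. finite (I k)" and meas: "\<And>k i. i \<in> I k \<Longrightarrow> A k i \<in> sets borel"
  shows "frac_perimeter s (\<Union>k. \<Union>i\<in>I k. A k i) \<le> (\<Sum>k. \<Sum>i\<in>I k. frac_perimeter s (A k i))"
proof -
  let ?U = "\<Union>k. \<Union>i\<in>I k. A k i"
  let ?g = "\<lambda>X x. indicator X x *
    (\<integral>\<^sup>+ y. indicator (- X) y * ennreal (dist x y powr (- (real DIM('a) + s))) \<partial>lborel)"
  have pw: "?g ?U x \<le> (\<Sum>k. \<Sum>i\<in>I k. ?g (A k i) x)" for x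
  proof (cases "x \<in> ?U")
    case True
    then obtain k0 i0 where ki: "i0 \<in> I k0" "x \<in> A k0 i0" by blast
    have "?g ?U x \<le> ?g (A k0 i0) x"
      using ki by (auto intro!: nn_integral_mono mult_right_mono simp: indicator_def)
    also have "\<dots> \<le> (\<Sum>i\<in>I k0. ?g (A k0 i) x)"
      using ki fin by (intro member_le_sum) auto
    also have "\<dots> \<le> (\<Sum>k. \<Sum>i\<in>I k. ?g (A k i) x)"
      using sum_le_suminf[OF summableI, of "{k0}" "\<lambda>k. \<Sum>i\<in>I k. ?g (A k i) x"] by simp
    finally show ?thesis .
  qed simp
  have m: "(\<lambda>x. \<Sum>i\<in>I k. ?g (A k i) x) \<in> borel_measurable borel" for k
    using meas by (intro borel_measurable_sum) (simp add: borel_comp)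
  have "frac_perimeter s ?U \<le> (\<integral>\<^sup>+ x. (\<Sum>k. \<Sum>i\<in>I k. ?g (A k i) x) \<partial>lborel)"
    unfolding frac_perimeter_def by (intro nn_integral_mono pw)
  also have "\<dots> = (\<Sum>k. \<integral>\<^sup>+ x. (\<Sum>i\<in>I k. ?g (A k i) x) \<partial>lborel)"
    using m by (intro nn_integral_suminf) simp
  also have "\<dots> = (\<Sum>k. \<Sum>i\<in>I k. frac_perimeter s (A k i))"
    unfolding frac_perimeter_def using meas by (subst nn_integral_sum) (auto simp: borel_comp)
  finally show ?thesis .
qed

lemma frac_interaction_pos:
  fixes A B :: "'a::euclidean_space set"
  assumes [measurable]: "A \<in> sets borel" "B \<in> sets borel"
    and A: "emeasure lborel A > 0" and B: "emeasure lborel B > 0"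
  shows "frac_interaction s A B > 0"
proof -
  let ?K = "\<lambda>x y. ennreal (dist x y powr (- (real DIM('a) + s)))"
  have inner: "(\<integral>\<^sup>+ y. indicator B y * ?K x y \<partial>lborel) \<noteq> 0" for x
  proof
    assume "(\<integral>\<^sup>+ y. indicator B y * ?K x y \<partial>lborel) = 0"
    then have "AE y in lborel. indicator B y * ?K x y = 0"
      by (subst (asm) nn_integral_0_iff_AE) auto
    moreover have "AE y in lborel. y \<noteq> x"
      by (rule AE_I[where N="{x}"]) auto
    ultimately have "AE y in lborel. y \<notin> B"
      by eventually_elim (auto simp: indicator_def)
    then have "emeasure lborel B = 0"
      by (subst (asm) AE_iff_measurable[OF _ refl]) auto
    with B show False by simp
  qed
  show ?thesis
  proof (rule ccontr)
    assume "\<not> ?thesis"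
    then have "frac_interaction s A B = 0" by (simp add: zero_less_iff_neq_zero)
    then have "AE x in lborel. indicator A x * (\<integral>\<^sup>+ y. indicator B y * ?K x y \<partial>lborel) = 0"
      unfolding frac_interaction_def by (subst (asm) nn_integral_0_iff_AE) auto
    then have "AE x in lborel. x \<notin> A"
      by eventually_elim (use inner in \<open>auto simp: indicator_def\<close>)
    then have "emeasure lborel A = 0"
      by (subst (asm) AE_iff_measurable[OF _ refl]) auto
    with A show False by simp
  qed
qed

lemma sum_frac_interaction_le_frac_perimeter:
  fixes A B :: "'i \<Rightarrow> 'a::euclidean_space set"
  assumes E[measurable]: "E \<in> sets borel" and J: "finite J"
    and A: "\<And>p. p \<in> J \<Longrightarrow> A p \<in> sets borel" "\<And>p. p \<in> J \<Longrightarrow> A p \<subseteq> E"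
    and B: "\<And>p. p \<in> J \<Longrightarrow> B p \<subseteq> - E"
    and null: "\<And>p q. p \<in> J \<Longrightarrow> q \<in> J \<Longrightarrow> p \<noteq> q \<Longrightarrow> A p \<inter> A q \<in> null_sets lborel"
  shows "(\<Sum>p\<in>J. frac_interaction s (A p) (B p)) \<le> frac_perimeter s E"
proof -
  define f where "f x = (\<integral>\<^sup>+ y. indicator (- E) y *
    ennreal (dist x y powr (- (real DIM('a) + s))) \<partial>lborel)" for x
  have [measurable]: "f \<in> borel_measurable borel" unfolding f_def by measurable
  have "AE x in lborel. \<forall>p\<in>J. \<forall>q\<in>J. p \<noteq> q \<longrightarrow> x \<notin> A p \<inter> A q"
  proof (intro AE_finite_allI J)
    fix p q assume "p \<in> J" "q \<in> J"
    show "AE x in lborel. p \<noteq> q \<longrightarrow> x \<notin> A p \<inter> A q"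
    proof (cases "p = q")
      case False
      with \<open>p \<in> J\<close> \<open>q \<in> J\<close> have "A p \<inter> A q \<in> null_sets lborel" by (rule null)
      then show ?thesis by (rule AE_mp[OF AE_not_in]) auto
    qed simp
  qed
  then have overlap: "AE x in lborel. (\<Sum>p\<in>J. indicator (A p) x) \<le> (indicator E x :: ennreal)"
  proof eventually_elim
    case (elim x)
    show ?case
    proof (cases "\<exists>p\<in>J. x \<in> A p")
      case True
      then obtain p0 where p0: "p0 \<in> J" "x \<in> A p0" by blast
      have "(\<Sum>p\<in>J. indicator (A p) x) = (indicator (A p0) x :: ennreal)
          + (\<Sum>p\<in>J - {p0}. indicator (A p) x)"
        using J p0(1) by (simp add: sum.remove)
      also have "(\<Sum>p\<in>J - {p0}. indicator (A p) x :: ennreal) = 0"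
        using elim p0 by (intro sum.neutral) (auto simp: indicator_def)
      finally show ?thesis
        using p0 A(2) by (auto simp: indicator_def)
    qed (simp add: indicator_def)
  qed
  have "(\<Sum>p\<in>J. frac_interaction s (A p) (B p)) \<le> (\<Sum>p\<in>J. \<integral>\<^sup>+ x. indicator (A p) x * f x \<partial>lborel)"
    unfolding frac_interaction_def f_def using B
    by (intro sum_mono nn_integral_mono mult_left_mono) (auto simp: indicator_def)
  also have "\<dots> = (\<integral>\<^sup>+ x. (\<Sum>p\<in>J. indicator (A p) x) * f x \<partial>lborel)"
    using A(1) by (subst nn_integral_sum[symmetric]) (auto simp: sum_distrib_right)
  also have "\<dots> \<le> (\<integral>\<^sup>+ x. indicator E x * f x \<partial>lborel)"
    using overlap by (intro nn_integral_mono_AE) (elim AE_mp, auto intro!: AE_I2 mult_right_mono)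
  also have "\<dots> = frac_perimeter s E" unfolding frac_perimeter_def f_def ..
  finally show ?thesis .
qed


section \<open>Finite perimeter implies finite fractional perimeter\<close>

lemma frac_perimeter_eq_shift_integral:
  fixes E :: "'a::euclidean_space set"
  assumes [measurable]: "E \<in> sets borel"
  shows "frac_perimeter s E = (\<integral>\<^sup>+ h. ennreal (norm h powr (- (real DIM('a) + s))) *
            (\<integral>\<^sup>+ x. indicator E x * indicator (- E) (x + h) \<partial>lborel) \<partial>lborel)"
proof -
  let ?k = "\<lambda>h::'a. ennreal (norm h powr (- (real DIM('a) + s)))"
  have inner: "(\<integral>\<^sup>+ y. indicator (- E) y * ennreal (dist x y powr (- (real DIM('a) + s))) \<partial>lborel)
      = (\<integral>\<^sup>+ h. indicator (- E) (x + h) * ?k h \<partial>lborel)" for x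
    using nn_integral_lborel_translate[of "\<lambda>y. indicator (- E) y *
        ennreal (dist x y powr (- (real DIM('a) + s)))" x]
    by (simp add: dist_norm add.commute)
  have "frac_perimeter s E
      = (\<integral>\<^sup>+ x. (\<integral>\<^sup>+ h. indicator E x * (indicator (- E) (x + h) * ?k h) \<partial>lborel) \<partial>lborel)"
    unfolding frac_perimeter_def inner
    by (intro nn_integral_cong nn_integral_cmult[symmetric]) measurable
  also have "\<dots> = (\<integral>\<^sup>+ h. (\<integral>\<^sup>+ x. indicator E x * (indicator (- E) (x + h) * ?k h) \<partial>lborel) \<partial>lborel)"
    by (rule lborel_pair.Fubini'[symmetric]) measurable
  also have "\<dots> = (\<integral>\<^sup>+ h. ?k h * (\<integral>\<^sup>+ x. indicator E x * indicator (- E) (x + h) \<partial>lborel) \<partial>lborel)"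
    by (intro nn_integral_cong) (subst nn_integral_cmult[symmetric], measurable, simp add: mult_ac)
  finally show ?thesis .
qed

definition dyadic_shell :: "int \<Rightarrow> 'a::real_normed_vector set" where
  "dyadic_shell j = {h. 2 powr j \<le> norm h \<and> norm h < 2 powr (j + 1)}"

lemma dyadic_shell_borel [measurable]:
  "(dyadic_shell j :: 'a::euclidean_space set) \<in> sets borel"
  unfolding dyadic_shell_def by measurable

lemma ex_dyadic_shell: "h \<noteq> 0 \<Longrightarrow> \<exists>j. h \<in> dyadic_shell j"
  using floor_log_eq_powr_iff[of "norm h" 2] by (auto simp: dyadic_shell_def)

lemma nn_integral_dyadic_shell_le:
  fixes g :: "'a::euclidean_space \<Rightarrow> ennreal"
  assumes [measurable]: "g \<in> borel_measurable borel"
    and bound: "\<And>h. h \<in> dyadic_shell j \<Longrightarrow> g h \<le> ennreal G" and G: "G \<ge> 0" and s: "s > 0"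
  shows "(\<integral>\<^sup>+ h. indicator (dyadic_shell j) h * (ennreal (norm h powr (- (real DIM('a) + s))) * g h) \<partial>lborel)
     \<le> ennreal (G * unit_ball_vol (real DIM('a)) * 2 powr (real DIM('a)) * 2 powr (- real_of_int j * s))"
proof -
  let ?n = "real DIM('a)" and ?A = "dyadic_shell j :: 'a set"
  have pt: "indicator ?A h * (ennreal (norm h powr (- (?n + s))) * g h)
      \<le> ennreal (2 powr (- real_of_int j * (?n + s)) * G) * indicator ?A h" for h
  proof (cases "h \<in> ?A")
    case True
    then have h: "2 powr j \<le> norm h" by (simp add: dyadic_shell_def)
    have "norm h powr (- (?n + s)) \<le> (2 powr j) powr (- (?n + s))"
      using h s by (intro powr_mono2') auto
    also have "\<dots> = 2 powr (- real_of_int j * (?n + s))" by (simp add: powr_powr algebra_simps)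
    finally show ?thesis
      using True bound[OF True] G by (auto simp: ennreal_mult intro!: mult_mono ennreal_leI)
  qed simp
  have "(\<integral>\<^sup>+ h. indicator ?A h * (ennreal (norm h powr (- (?n + s))) * g h) \<partial>lborel)
     \<le> (\<integral>\<^sup>+ h. ennreal (2 powr (- real_of_int j * (?n + s)) * G) * indicator ?A h \<partial>lborel)"
    by (intro nn_integral_mono pt)
  also have "\<dots> = ennreal (2 powr (- real_of_int j * (?n + s)) * G) * emeasure lborel ?A"
    by (simp add: nn_integral_cmult_indicator)
  also have "\<dots> \<le> ennreal (2 powr (- real_of_int j * (?n + s)) * G) * emeasure lborel (ball (0::'a) (2 powr (j+1)))"
    by (intro mult_left_mono emeasure_mono) (auto simp: dyadic_shell_def)
  also have "\<dots> = ennreal (2 powr (- real_of_int j * (?n + s)) * G * (unit_ball_vol ?n * (2 powr (j+1)) ^ DIM('a)))"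
    using G by (simp add: emeasure_ball ennreal_mult)
  also have "2 powr (- real_of_int j * (?n + s)) * G * (unit_ball_vol ?n * (2 powr (j+1)) ^ DIM('a))
      = G * unit_ball_vol ?n * 2 powr ?n * 2 powr (- real_of_int j * s)"
  proof -
    have "(2 powr (j+1)) ^ DIM('a) = 2 powr ((j+1) * ?n)"
      by (simp add: powr_realpow[symmetric] powr_powr)
    then have "2 powr (- real_of_int j * (?n + s)) * (2 powr (j+1)) ^ DIM('a) = 2 powr ?n * 2 powr (- real_of_int j * s)"
      by (simp add: powr_add[symmetric] algebra_simps)
    then show ?thesis by (simp add: mult_ac)
  qed
  finally show ?thesis .
qed

lemma suminf_ennreal_geometric_finite:
  fixes x :: "nat \<Rightarrow> ennreal"
  assumes "\<And>m. x m \<le> ennreal (K * q ^ m)" "0 \<le> q" "q < 1" "K \<ge> 0"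
  shows "(\<Sum>m. x m) < \<infinity>"
proof -
  have "summable (\<lambda>m. K * q ^ m)" using assms by (intro summable_mult summable_geometric) auto
  then have "(\<Sum>m. ennreal (K * q ^ m)) < \<infinity>"
    using assms by (metis ennreal_suminf_neq_top infinity_ennreal_def top.not_eq_extremum
        mult_nonneg_nonneg zero_le_power)
  then show ?thesis using assms(1) by (meson le_less_trans suminf_le summableI)
qed

lemma nn_integral_le_dyadic_shells:
  fixes F :: "'a::euclidean_space \<Rightarrow> ennreal"
  assumes [measurable]: "F \<in> borel_measurable borel"
  shows "(\<integral>\<^sup>+ h. F h \<partial>lborel)
    \<le> (\<Sum>m. \<integral>\<^sup>+ h. indicator (dyadic_shell (int m)) h * F h \<partial>lborel)
      + (\<Sum>m. \<integral>\<^sup>+ h. indicator (dyadic_shell (- int m - 1)) h * F h \<partial>lborel)"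
proof -
  let ?S1 = "\<lambda>h. (\<Sum>m. indicator (dyadic_shell (int m)) h * F h)"
  let ?S2 = "\<lambda>h. (\<Sum>m. indicator (dyadic_shell (- int m - 1)) h * F h)"
  have le_suminf: "f k \<le> suminf f" for f :: "nat \<Rightarrow> ennreal" and k
    using sum_le_suminf[OF summableI, of "{k}" f] by simp
  have pt: "F h \<le> ?S1 h + ?S2 h" if "h \<noteq> 0" for h
  proof -
    from ex_dyadic_shell[OF that] obtain j where hj: "h \<in> dyadic_shell j" ..
    show ?thesis
    proof (cases "j \<ge> 0")
      case True
      then have "F h = indicator (dyadic_shell (int (nat j))) h * F h" using hj by simp
      also have "\<dots> \<le> ?S1 h" by (rule le_suminf)
      finally show ?thesis by (rule order_trans) (rule add_increasing2, auto)
    next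
      case False
      then have "F h = indicator (dyadic_shell (- int (nat (- j - 1)) - 1)) h * F h"
        using hj by simp
      also have "\<dots> \<le> ?S2 h" by (rule le_suminf)
      finally show ?thesis by (rule order_trans) (rule add_increasing, auto)
    qed
  qed
  have "AE h in lborel. h \<noteq> (0::'a)" by (rule AE_I[where N="{0}"]) auto
  then have "(\<integral>\<^sup>+ h. F h \<partial>lborel) \<le> (\<integral>\<^sup>+ h. ?S1 h + ?S2 h \<partial>lborel)"
    by (intro nn_integral_mono_AE) (rule AE_mp, assumption, rule AE_I2, use pt in auto)
  also have "\<dots> = (\<integral>\<^sup>+ h. ?S1 h \<partial>lborel) + (\<integral>\<^sup>+ h. ?S2 h \<partial>lborel)"
    by (rule nn_integral_add) measurable
  also have "(\<integral>\<^sup>+ h. ?S1 h \<partial>lborel)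
      = (\<Sum>m. \<integral>\<^sup>+ h. indicator (dyadic_shell (int m)) h * F h \<partial>lborel)"
    by (rule nn_integral_suminf) measurable
  also have "(\<integral>\<^sup>+ h. ?S2 h \<partial>lborel)
      = (\<Sum>m. \<integral>\<^sup>+ h. indicator (dyadic_shell (- int m - 1)) h * F h \<partial>lborel)"
    by (rule nn_integral_suminf) measurable
  finally show ?thesis .
qed

text \<open>A weight bounded by \<open>M\<close> makes the far shells summable (because \<open>s > 0\<close>), and a weight
  bounded by \<open>C |h|\<close> makes the near shells summable (because \<open>s < 1\<close>).\<close>
lemma nn_integral_frac_kernel_finite:
  fixes g :: "'a::euclidean_space \<Rightarrow> ennreal"
  assumes g[measurable]: "g \<in> borel_measurable borel" and s: "0 < s" "s < 1"
    and M: "M \<ge> 0" and C: "C \<ge> 0"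
    and gM: "\<And>h. g h \<le> ennreal M" and gC: "\<And>h. g h \<le> ennreal (C * norm h)"
  shows "(\<integral>\<^sup>+ h. ennreal (norm h powr (- (real DIM('a) + s))) * g h \<partial>lborel) < \<infinity>"
proof -
  let ?n = "real DIM('a)" and ?v = "unit_ball_vol (real DIM('a))"
  let ?F = "\<lambda>h::'a. ennreal (norm h powr (- (?n + s))) * g h"
  have far: "(\<Sum>m. \<integral>\<^sup>+ h. indicator (dyadic_shell (int m)) h * ?F h \<partial>lborel) < \<infinity>"
  proof (rule suminf_ennreal_geometric_finite[where K = "M * ?v * 2 powr ?n" and q = "2 powr (- s)"])
    fix m :: nat
    have "2 powr (- int m * s) = (2 powr (- s)) ^ m"
      by (simp add: powr_realpow[symmetric] powr_powr mult.commute)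
    then show "(\<integral>\<^sup>+ h. indicator (dyadic_shell (int m)) h * ?F h \<partial>lborel)
        \<le> ennreal (M * ?v * 2 powr ?n * (2 powr (- s)) ^ m)"
      using nn_integral_dyadic_shell_le[OF g _ M s(1), of "int m"] gM by simp
  qed (use s M in \<open>auto simp: powr_less_one\<close>)
  have near: "(\<Sum>m. \<integral>\<^sup>+ h. indicator (dyadic_shell (- int m - 1)) h * ?F h \<partial>lborel) < \<infinity>"
  proof (rule suminf_ennreal_geometric_finite[where K = "C * ?v * 2 powr ?n * 2 powr s"
        and q = "2 powr (- (1 - s))"])
    fix m :: nat
    have "g h \<le> ennreal (C * 2 powr (- int m))" if "h \<in> dyadic_shell (- int m - 1)" for h
    proof -
      have "C * norm h \<le> C * 2 powr (- int m)"
        using that C by (intro mult_left_mono) (auto simp: dyadic_shell_def)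
      then show ?thesis using gC[of h] by (meson ennreal_leI order_trans)
    qed
    then have "(\<integral>\<^sup>+ h. indicator (dyadic_shell (- int m - 1)) h * ?F h \<partial>lborel)
        \<le> ennreal (C * 2 powr (- int m) * ?v * 2 powr ?n * 2 powr (- (- int m - 1) * s))"
      using nn_integral_dyadic_shell_le[OF g, of "- int m - 1" "C * 2 powr (- int m)"] C s by simp
    also have "C * 2 powr (- int m) * ?v * 2 powr ?n * 2 powr (- (- int m - 1) * s)
        = C * ?v * 2 powr ?n * 2 powr s * (2 powr (- (1 - s))) ^ m"
    proof -
      have "(2 powr (- (1 - s))) ^ m = 2 powr (- real m * (1 - s))"
        by (simp add: powr_realpow[symmetric] powr_powr algebra_simps)
      moreover have "2 powr (- int m) * 2 powr (- (- int m - 1) * s)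
          = 2 powr s * 2 powr (- real m * (1 - s))"
        by (simp add: powr_add[symmetric] algebra_simps)
      ultimately show ?thesis by (simp add: mult_ac)
    qed
    finally show "(\<integral>\<^sup>+ h. indicator (dyadic_shell (- int m - 1)) h * ?F h \<partial>lborel)
        \<le> ennreal (C * ?v * 2 powr ?n * 2 powr s * (2 powr (- (1 - s))) ^ m)" .
  qed (use s C in \<open>auto simp: powr_less_one\<close>)
  have "(\<integral>\<^sup>+ h. ?F h \<partial>lborel) \<le> (\<Sum>m. \<integral>\<^sup>+ h. indicator (dyadic_shell (int m)) h * ?F h \<partial>lborel)
      + (\<Sum>m. \<integral>\<^sup>+ h. indicator (dyadic_shell (- int m - 1)) h * ?F h \<partial>lborel)"
    by (rule nn_integral_le_dyadic_shells) measurable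
  also have "\<dots> < \<infinity>" using far near by (simp add: top.not_eq_extremum[symmetric] ennreal_add_eq_top)
  finally show ?thesis .
qed


subsection \<open>Smooth approximation of an open set from inside\<close>

definition pos_sq :: "real \<Rightarrow> real" where "pos_sq t = (max 0 t)\<^sup>2"

lemma pos_sq_deriv: "(pos_sq has_real_derivative (2 * max 0 t)) (at t)"
proof (cases "t = 0")
  case True
  have eq: "\<forall>\<^sub>F h in at (0::real). (pos_sq (0 + h) - pos_sq 0) / h = max 0 h"
    by (rule eventually_at_ball[of 1, THEN eventually_mono])
       (auto simp: pos_sq_def power2_eq_square max_def)
  have "((\<lambda>h. max 0 h) \<longlongrightarrow> max 0 (0::real)) (at 0)"
    by (intro tendsto_max tendsto_const tendsto_ident_at)
  then have "((\<lambda>h. (pos_sq (0 + h) - pos_sq 0) / h) \<longlongrightarrow> 0) (at 0)"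
    using tendsto_cong[OF eq] by simp
  then show ?thesis using True by (simp add: DERIV_def)
next
  case False
  show ?thesis
  proof (cases "t > 0")
    case True
    have "((\<lambda>t. t\<^sup>2) has_real_derivative (2 * t)) (at t)" by (auto intro!: derivative_eq_intros)
    then have "(pos_sq has_real_derivative (2 * t)) (at t)"
      by (rule has_field_derivative_transform_within_open[of _ _ _ "{0<..}"])
         (use True in \<open>auto simp: pos_sq_def\<close>)
    then show ?thesis using True by simp
  next
    case False
    with \<open>t \<noteq> 0\<close> have "t < 0" by simp
    have "((\<lambda>t. 0) has_real_derivative 0) (at t)" by simp
    then have "(pos_sq has_real_derivative 0) (at t)"
      by (rule has_field_derivative_transform_within_open[of _ _ _ "{..<0}"])
         (use \<open>t < 0\<close> in \<open>auto simp: pos_sq_def\<close>)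
    then show ?thesis using \<open>t < 0\<close> by simp
  qed
qed

lemma pos_sq_nonneg: "pos_sq t \<ge> 0" by (simp add: pos_sq_def)
lemma pos_sq_pos: "t > 0 \<Longrightarrow> pos_sq t > 0" by (simp add: pos_sq_def)
lemma pos_sq_eq_0: "t \<le> 0 \<Longrightarrow> pos_sq t = 0" by (simp add: pos_sq_def)
lemma continuous_on_pos_sq: "continuous_on UNIV pos_sq"
  unfolding pos_sq_def[abs_def] by (intro continuous_intros)

text \<open>A \<open>C\<^sup>1\<close> function equal to \<open>1\<close> on \<open>(-\<infinity>, 1]\<close> and to \<open>0\<close> on \<open>[4, \<infinity>)\<close>; applied to
  \<open>|y - c|\<^sup>2 / r\<^sup>2\<close> it is a bump on \<open>ball c (2 r)\<close> equal to \<open>1\<close> on \<open>ball c r\<close>.\<close>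
definition cutoff_denom :: "real \<Rightarrow> real" where "cutoff_denom t = pos_sq (4 - t) + pos_sq (t - 1)"
definition cutoff :: "real \<Rightarrow> real" where "cutoff t = pos_sq (4 - t) / cutoff_denom t"
definition cutoff' :: "real \<Rightarrow> real" where
  "cutoff' t = ((2 * max 0 (4 - t) * (-1)) * cutoff_denom t
     - pos_sq (4 - t) * (2 * max 0 (4 - t) * (-1) + 2 * max 0 (t - 1) * 1))
     / (cutoff_denom t * cutoff_denom t)"

lemma cutoff_denom_pos: "cutoff_denom t > 0"
  using pos_sq_pos[of "4 - t"] pos_sq_pos[of "t - 1"] pos_sq_nonneg[of "4 - t"] pos_sq_nonneg[of "t - 1"]
  by (cases "t < 4") (simp_all add: cutoff_denom_def)

lemma cutoff_deriv: "(cutoff has_real_derivative cutoff' t) (at t)"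
proof -
  have a: "((\<lambda>t. pos_sq (4 - t)) has_real_derivative (2 * max 0 (4 - t) * (-1))) (at t)"
    by (rule DERIV_chain2[OF pos_sq_deriv]) (auto intro!: derivative_eq_intros)
  have b: "((\<lambda>t. pos_sq (t - 1)) has_real_derivative (2 * max 0 (t - 1) * 1)) (at t)"
    by (rule DERIV_chain2[OF pos_sq_deriv]) (auto intro!: derivative_eq_intros)
  have "(cutoff_denom has_real_derivative (2 * max 0 (4 - t) * (-1) + 2 * max 0 (t - 1) * 1)) (at t)"
    unfolding cutoff_denom_def[abs_def] by (rule DERIV_add[OF a b])
  from DERIV_divide[OF a this] show ?thesis
    using cutoff_denom_pos[of t] by (simp add: cutoff_def[abs_def] cutoff'_def)
qed

lemma continuous_on_cutoff': "continuous_on UNIV cutoff'"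
proof -
  have "continuous_on UNIV cutoff_denom" unfolding cutoff_denom_def[abs_def]
    by (intro continuous_intros continuous_on_compose2[OF continuous_on_pos_sq]) auto
  moreover have "cutoff_denom t \<noteq> 0" for t using cutoff_denom_pos by (metis less_irrefl)
  ultimately show ?thesis unfolding cutoff'_def[abs_def]
    by (intro continuous_intros continuous_on_compose2[OF continuous_on_pos_sq]) auto
qed

lemma cutoff_eq_1: "t \<le> 1 \<Longrightarrow> cutoff t = 1"
  using pos_sq_pos[of "4 - t"] by (simp add: cutoff_def cutoff_denom_def pos_sq_eq_0)
lemma cutoff_eq_0: "t \<ge> 4 \<Longrightarrow> cutoff t = 0"
  by (simp add: cutoff_def pos_sq_eq_0)
lemma cutoff_nonneg: "cutoff t \<ge> 0"
  using cutoff_denom_pos[of t] pos_sq_nonneg[of "4 - t"] by (simp add: cutoff_def)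
lemma cutoff_le_1: "cutoff t \<le> 1"
  using cutoff_denom_pos[of t] pos_sq_nonneg[of "t - 1"]
  by (simp add: cutoff_def cutoff_denom_def divide_le_eq)

lemma cutoff_bump_eq_1:
  fixes c y :: "'a::real_inner"
  assumes "r > 0" "norm (y - c) < r"
  shows "cutoff ((y - c) \<bullet> (y - c) / r\<^sup>2) = 1"
proof -
  have "(norm (y - c))\<^sup>2 < r\<^sup>2" using assms by (intro power_strict_mono) auto
  then show ?thesis using assms(1)
    by (intro cutoff_eq_1) (simp add: power2_norm_eq_inner divide_le_eq)
qed

lemma cutoff_bump_eq_0:
  fixes c y :: "'a::real_inner"
  assumes "r > 0" "2 * r \<le> norm (y - c)"
  shows "cutoff ((y - c) \<bullet> (y - c) / r\<^sup>2) = 0"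
proof -
  have "(2 * r)\<^sup>2 \<le> (norm (y - c))\<^sup>2" using assms by (intro power_mono) auto
  then have "4 * r\<^sup>2 \<le> (y - c) \<bullet> (y - c)" by (simp add: power2_norm_eq_inner power_mult_distrib)
  then show ?thesis using assms(1) by (intro cutoff_eq_0) (simp add: le_divide_eq)
qed

text \<open>Continuity of the derivative is only required along each fixed direction.\<close>
definition C1 :: "('a::real_normed_vector \<Rightarrow> real) \<Rightarrow> ('a \<Rightarrow> 'a \<Rightarrow> real) \<Rightarrow> bool" where
  "C1 f f' \<longleftrightarrow> (\<forall>y. (f has_derivative f' y) (at y)) \<and> (\<forall>w. continuous_on UNIV (\<lambda>y. f' y w))
     \<and> continuous_on UNIV f"

lemma C1_one_minus: "C1 f f' \<Longrightarrow> C1 (\<lambda>y. 1 - f y) (\<lambda>y w. - f' y w)"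
  unfolding C1_def by (auto intro!: derivative_eq_intros continuous_intros)

lemma C1_prod:
  assumes "finite I" "\<And>i. i \<in> I \<Longrightarrow> C1 (f i) (f' i)"
  shows "C1 (\<lambda>y. \<Prod>i\<in>I. f i y) (\<lambda>y w. \<Sum>i\<in>I. f' i y w * (\<Prod>j\<in>I - {i}. f j y))"
  unfolding C1_def
proof (intro conjI allI)
  fix y show "((\<lambda>y. \<Prod>i\<in>I. f i y) has_derivative (\<lambda>w. \<Sum>i\<in>I. f' i y w * (\<Prod>j\<in>I - {i}. f j y))) (at y)"
    using assms unfolding C1_def by (intro has_derivative_prod) auto
next
  fix w show "continuous_on UNIV (\<lambda>y. \<Sum>i\<in>I. f' i y w * (\<Prod>j\<in>I - {i}. f j y))"
    using assms unfolding C1_def by (intro continuous_intros) auto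
next
  show "continuous_on UNIV (\<lambda>y. \<Prod>i\<in>I. f i y)"
    using assms unfolding C1_def by (intro continuous_intros) auto
qed

lemma C1_cutoff_bump:
  fixes c :: "'a::real_inner"
  assumes r: "r > 0"
  shows "C1 (\<lambda>y. cutoff ((y - c) \<bullet> (y - c) / r\<^sup>2))
    (\<lambda>y w. cutoff' ((y - c) \<bullet> (y - c) / r\<^sup>2) * (2 * ((y - c) \<bullet> w) / r\<^sup>2))"
proof -
  let ?q = "\<lambda>y. (y - c) \<bullet> (y - c) / r\<^sup>2"
  have r2: "r\<^sup>2 \<noteq> 0" using r by simp
  have cq: "continuous_on UNIV ?q"
    by (intro continuous_on_divide continuous_on_inner continuous_on_diff continuous_on_id
        continuous_on_const) (use r2 in auto)
  have "((\<lambda>y. cutoff (?q y)) has_derivative (\<lambda>w. cutoff' (?q y) * (2 * ((y - c) \<bullet> w) / r\<^sup>2))) (at y)"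
    for y
  proof -
    have "(?q has_derivative (\<lambda>w. 2 * ((y - c) \<bullet> w) / r\<^sup>2)) (at y)"
      using r by (auto intro!: derivative_eq_intros ext simp: inner_commute divide_simps power2_eq_square)
    from has_derivative_compose[OF this cutoff_deriv[unfolded has_field_derivative_def]]
    show ?thesis by simp
  qed
  moreover have "continuous_on UNIV (\<lambda>y. cutoff' (?q y) * (2 * ((y - c) \<bullet> w) / r\<^sup>2))" for w
  proof (rule continuous_on_mult)
    show "continuous_on UNIV (\<lambda>y. cutoff' (?q y))"
      using continuous_on_compose2[OF continuous_on_cutoff' cq] by simp
    show "continuous_on UNIV (\<lambda>y. 2 * ((y - c) \<bullet> w) / r\<^sup>2)"
      by (intro continuous_on_divide continuous_on_mult continuous_on_inner continuous_on_diff
          continuous_on_id continuous_on_const) (use r2 in auto)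
  qed
  moreover have "continuous_on UNIV (\<lambda>y. cutoff (?q y))"
  proof -
    have "continuous_on UNIV cutoff"
      using cutoff_deriv by (meson DERIV_isCont continuous_at_imp_continuous_on)
    from continuous_on_compose2[OF this cq] show ?thesis by simp
  qed
  ultimately show ?thesis unfolding C1_def by blast
qed

text \<open>A smooth Urysohn function: a finite cover of \<open>K\<close> by balls \<open>ball x r\<close> with
  \<open>ball x (2 r) \<subseteq> U\<close>, and \<open>u = 1 - \<Prod>(1 - bump)\<close>.\<close>
lemma C1_urysohn:
  fixes K U :: "'a::euclidean_space set"
  assumes K: "compact K" and U: "open U" and KU: "K \<subseteq> U"
  obtains u f' where "C1 u f'" "\<And>x. 0 \<le> u x" "\<And>x. u x \<le> 1"
    "\<And>x. x \<in> K \<Longrightarrow> u x = 1" "\<And>x. x \<notin> U \<Longrightarrow> u x = 0"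
proof -
  have "\<forall>x\<in>K. \<exists>r>0. ball x (2 * r) \<subseteq> U"
  proof
    fix x assume "x \<in> K"
    then obtain \<epsilon> where "\<epsilon> > 0" "ball x \<epsilon> \<subseteq> U" using KU U open_contains_ball by blast
    then show "\<exists>r>0. ball x (2 * r) \<subseteq> U" by (intro exI[of _ "\<epsilon>/2"]) auto
  qed
  then obtain rr where rr: "\<And>x. x \<in> K \<Longrightarrow> rr x > 0" "\<And>x. x \<in> K \<Longrightarrow> ball x (2 * rr x) \<subseteq> U"
    by metis
  have "K \<subseteq> (\<Union>x\<in>K. ball x (rr x))" using rr(1) by force
  from compactE_image[OF K _ this] obtain T where T: "T \<subseteq> K" "finite T" "K \<subseteq> (\<Union>x\<in>T. ball x (rr x))"
    by auto
  define \<beta> where "\<beta> x y = cutoff ((y - x) \<bullet> (y - x) / (rr x)\<^sup>2)" for x y :: 'a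
  define \<beta>' where "\<beta>' x y w = cutoff' ((y - x) \<bullet> (y - x) / (rr x)\<^sup>2) * (2 * ((y - x) \<bullet> w) / (rr x)\<^sup>2)"
    for x y w :: 'a
  define u where "u y = 1 - (\<Prod>x\<in>T. 1 - \<beta> x y)" for y
  have "C1 (\<beta> x) (\<beta>' x)" if "x \<in> T" for x
    unfolding \<beta>_def[abs_def] \<beta>'_def[abs_def] using C1_cutoff_bump[OF rr(1), of x] that T(1) by auto
  then have C1u: "C1 u (\<lambda>y w. - (\<Sum>i\<in>T. - \<beta>' i y w * (\<Prod>j\<in>T - {i}. 1 - \<beta> j y)))"
    unfolding u_def[abs_def] by (intro C1_one_minus C1_prod[OF T(2)])
  have "0 \<le> (\<Prod>x\<in>T. 1 - \<beta> x y)" "(\<Prod>x\<in>T. 1 - \<beta> x y) \<le> 1" for y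
    unfolding \<beta>_def using cutoff_nonneg cutoff_le_1 by (auto intro: prod_nonneg prod_le_1)
  then have u01: "0 \<le> u y" "u y \<le> 1" for y by (auto simp: u_def)
  have u1: "u y = 1" if "y \<in> K" for y
  proof -
    obtain x where x: "x \<in> T" "y \<in> ball x (rr x)" using T(3) \<open>y \<in> K\<close> by blast
    then have "\<beta> x y = 1" unfolding \<beta>_def
      using T(1) rr(1) by (intro cutoff_bump_eq_1) (auto simp: dist_norm norm_minus_commute)
    then have "(\<Prod>x\<in>T. 1 - \<beta> x y) = 0" using x(1) T(2) by (intro prod_zero) auto
    then show ?thesis by (simp add: u_def)
  qed
  have u0: "u y = 0" if "y \<notin> U" for y
  proof -
    have "\<beta> x y = 0" if "x \<in> T" for x
    proof -
      have "x \<in> K" using that T(1) by blast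
      then have "y \<notin> ball x (2 * rr x)" using rr(2) \<open>y \<notin> U\<close> by blast
      then show ?thesis unfolding \<beta>_def
        using rr(1)[OF \<open>x \<in> K\<close>] by (intro cutoff_bump_eq_0) (auto simp: dist_norm norm_minus_commute)
    qed
    then show ?thesis by (simp add: u_def)
  qed
  show ?thesis by (rule that[OF C1u u01 u1 u0])
qed

lemma C1_approx_indicator_open:
  fixes E :: "'a::euclidean_space set"
  assumes E: "open E" "bounded E" and e: "e > 0"
  obtains u f' D where "C1 u f'" "\<And>x. 0 \<le> u x" "\<And>x. u x \<le> 1" "\<And>x. x \<notin> E \<Longrightarrow> u x = 0"
    "D \<in> sets borel" "emeasure lborel D < ennreal e" "\<And>x. \<bar>indicator E x - u x\<bar> \<le> indicator D x"
proof -
  have "E \<in> sets lebesgue" using E(1) by simp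
  from sets_lebesgue_inner_closed[OF this e] obtain C
    where C: "closed C" "C \<subseteq> E" "E - C \<in> lmeasurable" "emeasure lebesgue (E - C) < ennreal e"
    by blast
  have D: "E - C \<in> sets borel" using E(1) C(1) by auto
  have "compact C" using C(1,2) E(2) bounded_subset compact_eq_bounded_closed by blast
  obtain u f' where u: "C1 u f'" "\<And>x. 0 \<le> u x" "\<And>x. u x \<le> 1"
      "\<And>x. x \<in> C \<Longrightarrow> u x = 1" "\<And>x. x \<notin> E \<Longrightarrow> u x = 0"
    using C1_urysohn[OF \<open>compact C\<close> E(1) C(2)] by blast
  have "\<bar>indicator E x - u x\<bar> \<le> indicator (E - C) x" for x
  proof (cases "x \<in> C")
    case True then show ?thesis using u(4) C(2) by (auto simp: indicator_def)
  next
    case False then show ?thesis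
      using u(2)[of x] u(3)[of x] u(5)[of x] by (cases "x \<in> E") (auto simp: indicator_def)
  qed
  moreover have "emeasure lborel (E - C) < ennreal e"
    using C(4) D by (simp add: emeasure_completion main_part_sets)
  ultimately show ?thesis using that[OF u(1,2,3,5) D] by blast
qed


subsection \<open>The shift estimate \<open>|E \<inter> (-E - h)| \<le> |h| P(E)\<close>\<close>

lemma perimeter_nonneg: "perimeter E \<ge> 0"
proof -
  have "admissible_field (\<lambda>x. 0::'a)" by (auto simp: admissible_field_def)
  then have "ereal (LINT x:E|lborel. divergence (\<lambda>x. 0::'a) x) \<le> perimeter E"
    unfolding perimeter_def by (intro SUP_upper) auto
  then show ?thesis by (simp add: divergence_def frechet_derivative_const zero_ereal_def)
qed

lemma perimeter_ge_divergence_integral: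
  "admissible_field \<phi> \<Longrightarrow> ereal (LINT x:E|lborel. divergence \<phi> x) \<le> perimeter E"
  unfolding perimeter_def by (intro SUP_upper) auto

lemma set_integrable_continuous_bounded:
  fixes f :: "'a::euclidean_space \<Rightarrow> real"
  assumes f: "continuous_on UNIV f" and E: "bounded E" "E \<in> sets borel"
  shows "set_integrable lborel E f"
proof -
  have "compact (f ` closure E)"
    using E by (intro compact_continuous_image continuous_on_subset[OF f]) (auto simp: compact_closure)
  then have "bounded (f ` closure E)" by (rule compact_imp_bounded)
  then obtain B where B: "\<And>x. x \<in> closure E \<Longrightarrow> norm (f x) \<le> B"
    unfolding bounded_iff by blast
  show ?thesis unfolding set_integrable_def
  proof (rule integrableI_bounded_set_indicator[where B=B])
    show "f \<in> borel_measurable lborel" using f by (simp add: borel_measurable_continuous_onI)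
    show "AE x in lborel. x \<in> E \<longrightarrow> norm (f x) \<le> B"
      by (rule AE_I2) (meson B closure_subset subsetD)
  qed (use E emeasure_bounded_finite in auto)
qed

lemma diff_le_deriv_uniform:
  fixes u :: "'a::euclidean_space \<Rightarrow> real"
  assumes du: "\<And>y. (u has_derivative f' y) (at y)"
    and uc: "\<And>y z. y \<in> K \<Longrightarrow> z \<in> K \<Longrightarrow> dist y z < \<delta> \<Longrightarrow> \<bar>f' y h - f' z h\<bar> < \<eta>"
    and seg: "\<And>t. a \<le> t \<Longrightarrow> t \<le> b \<Longrightarrow> x - t *\<^sub>R h \<in> K"
    and ab: "a < b" "(b - a) * norm h < \<delta>"
  shows "u (x - a *\<^sub>R h) - u (x - b *\<^sub>R h) \<le> (b - a) * f' (x - a *\<^sub>R h) h + (b - a) * \<eta>"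
proof -
  define q where "q t = u (x - t *\<^sub>R h)" for t
  have lin: "linear (f' y)" for y using du[of y] has_derivative_linear by blast
  have dq: "(q has_derivative (\<lambda>dt. - (dt * f' (x - t *\<^sub>R h) h))) (at t within {a..b})" for t
  proof -
    have "((\<lambda>t. x - t *\<^sub>R h) has_derivative (\<lambda>dt. - (dt *\<^sub>R h))) (at t within {a..b})"
      by (auto intro!: derivative_eq_intros)
    from has_derivative_compose[OF this du[of "x - t *\<^sub>R h"]]
    show ?thesis using lin by (simp add: q_def[abs_def] linear_neg linear_cmul)
  qed
  obtain \<tau> where \<tau>: "\<tau> \<in> {a<..<b}" "q b - q a = - ((b - a) * f' (x - \<tau> *\<^sub>R h) h)"
    using mvt_simple[OF ab(1) dq] by blast
  have "dist (x - \<tau> *\<^sub>R h) (x - a *\<^sub>R h) = (\<tau> - a) * norm h"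
    using \<tau>(1) by (simp add: dist_norm scaleR_diff_left[symmetric])
  also have "\<dots> < \<delta>"
    using \<tau>(1) ab(2) mult_right_mono[of "\<tau> - a" "b - a" "norm h"] by auto
  finally have "\<bar>f' (x - \<tau> *\<^sub>R h) h - f' (x - a *\<^sub>R h) h\<bar> < \<eta>"
    using uc[OF seg seg] \<tau>(1) by auto
  then have "(b - a) * f' (x - \<tau> *\<^sub>R h) h \<le> (b - a) * (f' (x - a *\<^sub>R h) h + \<eta>)"
    using ab(1) by (intro mult_left_mono) auto
  then show ?thesis using \<tau>(2) unfolding q_def by (simp add: algebra_simps)
qed

text \<open>Telescoping over the \<open>N\<close> steps \<open>x - (k/N) h\<close> of the segment from \<open>x\<close> to \<open>x - h\<close>.\<close>
lemma diff_le_riemann_sum: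
  fixes u :: "'a::euclidean_space \<Rightarrow> real"
  assumes du: "\<And>y. (u has_derivative f' y) (at y)"
    and uc: "\<And>y z. y \<in> K \<Longrightarrow> z \<in> K \<Longrightarrow> dist y z < \<delta> \<Longrightarrow> \<bar>f' y h - f' z h\<bar> < \<eta>"
    and seg: "\<And>t. 0 \<le> t \<Longrightarrow> t \<le> 1 \<Longrightarrow> x - t *\<^sub>R h \<in> K"
    and N: "N > 0" "norm h / real N < \<delta>"
  shows "u x - u (x - h) \<le> (1 / real N) * (\<Sum>k<N. f' (x - (real k / real N) *\<^sub>R h) h) + \<eta>"
proof -
  define c where "c k = (real k / real N) *\<^sub>R h" for k :: nat
  have step: "u (x - c k) - u (x - c (Suc k)) \<le> (1 / real N) * f' (x - c k) h + (1 / real N) * \<eta>"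
    if "k < N" for k
  proof -
    have "real (Suc k) / real N - real k / real N = 1 / real N"
      by (simp add: diff_divide_distrib[symmetric])
    moreover have "u (x - (real k / real N) *\<^sub>R h) - u (x - (real (Suc k) / real N) *\<^sub>R h)
        \<le> (real (Suc k) / real N - real k / real N) * f' (x - (real k / real N) *\<^sub>R h) h
          + (real (Suc k) / real N - real k / real N) * \<eta>"
    proof (rule diff_le_deriv_uniform[OF du uc])
      fix t assume "real k / real N \<le> t" "t \<le> real (Suc k) / real N"
      moreover have "real (Suc k) / real N \<le> 1" using that N by (simp add: divide_le_eq_1)
      ultimately show "x - t *\<^sub>R h \<in> K" by (intro seg) (auto intro: order_trans[rotated])
    next
      show "real k / real N < real (Suc k) / real N" using N by (simp add: divide_strict_right_mono)
      show "(real (Suc k) / real N - real k / real N) * norm h < \<delta>"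
        using N by (simp add: diff_divide_distrib[symmetric])
    qed
    ultimately show ?thesis by (simp add: c_def)
  qed
  have "u x - u (x - h) = - (\<Sum>k<N. u (x - c (Suc k)) - u (x - c k))"
    using N by (subst sum_lessThan_telescope) (simp add: c_def)
  also have "\<dots> = (\<Sum>k<N. u (x - c k) - u (x - c (Suc k)))"
    by (simp add: sum_negf[symmetric])
  also have "\<dots> \<le> (\<Sum>k<N. (1 / real N) * f' (x - c k) h + (1 / real N) * \<eta>)"
    by (intro sum_mono step) auto
  also have "\<dots> = (1 / real N) * (\<Sum>k<N. f' (x - c k) h) + \<eta>"
    using N by (simp add: sum.distrib sum_distrib_left)
  finally show ?thesis by (simp add: c_def)
qed

text \<open>The divergence of this test field is a Riemann sum for \<open>(u x - u (x - h)) / |h|\<close>.\<close>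
definition averaged_field :: "('a::real_normed_vector \<Rightarrow> real) \<Rightarrow> nat \<Rightarrow> 'a \<Rightarrow> 'a \<Rightarrow> 'a" where
  "averaged_field u N h x =
     (inverse (real N * norm h) * (\<Sum>k<N. u (x - (real k / real N) *\<^sub>R h))) *\<^sub>R h"

lemma has_derivative_averaged_field:
  assumes du: "\<And>y. (u has_derivative f' y) (at y)"
  shows "(averaged_field u N h has_derivative
    (\<lambda>w. (inverse (real N * norm h) * (\<Sum>k<N. f' (x - (real k / real N) *\<^sub>R h) w)) *\<^sub>R h)) (at x)"
proof -
  have "((\<lambda>x. u (x - c)) has_derivative f' (x - c)) (at x)" for c
  proof -
    have "((\<lambda>x. x - c) has_derivative (\<lambda>w. w)) (at x)"
      by (auto intro!: derivative_eq_intros)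
    from has_derivative_compose[OF this du[of "x - c"]] show ?thesis by simp
  qed
  then have "((\<lambda>x. \<Sum>k<N. u (x - (real k / real N) *\<^sub>R h)) has_derivative
      (\<lambda>w. \<Sum>k<N. f' (x - (real k / real N) *\<^sub>R h) w)) (at x)"
    by (intro has_derivative_sum)
  from has_derivative_scaleR_left[OF has_derivative_mult_right[OF this, of "inverse (real N * norm h)"], of h]
  show ?thesis unfolding averaged_field_def[abs_def] .
qed

lemma divergence_averaged_field:
  fixes u :: "'a::euclidean_space \<Rightarrow> real"
  assumes du: "\<And>y. (u has_derivative f' y) (at y)"
  shows "divergence (averaged_field u N h) x
    = inverse (real N * norm h) * (\<Sum>k<N. f' (x - (real k / real N) *\<^sub>R h) h)"
proof -
  have lin: "linear (f' y)" for y using du[of y] has_derivative_linear by blast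
  have f'h: "(\<Sum>i\<in>Basis. (h \<bullet> i) * f' y i) = f' y h" for y
  proof -
    have "f' y h = f' y (\<Sum>i\<in>Basis. (h \<bullet> i) *\<^sub>R i)" by (simp add: euclidean_representation)
    also have "\<dots> = (\<Sum>i\<in>Basis. (h \<bullet> i) * f' y i)"
      using lin[of y] by (simp add: linear_sum linear_cmul)
    finally show ?thesis ..
  qed
  have "divergence (averaged_field u N h) x
      = (\<Sum>i\<in>Basis. inverse (real N * norm h) * (\<Sum>k<N. f' (x - (real k / real N) *\<^sub>R h) i) * (h \<bullet> i))"
    unfolding divergence_def frechet_derivative_at[OF has_derivative_averaged_field[OF du], symmetric]
    by simp
  also have "\<dots> = inverse (real N * norm h)
      * (\<Sum>k<N. \<Sum>i\<in>Basis. (h \<bullet> i) * f' (x - (real k / real N) *\<^sub>R h) i)"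
    by (simp add: sum_distrib_left sum_distrib_right sum.swap[of _ Basis] mult_ac)
  finally show ?thesis by (simp add: f'h)
qed

lemma admissible_averaged_field:
  fixes u :: "'a::euclidean_space \<Rightarrow> real"
  assumes u: "C1 u f'" "\<And>x. 0 \<le> u x" "\<And>x. u x \<le> 1" and uE: "\<And>x. x \<notin> E \<Longrightarrow> u x = 0"
    and E: "E \<subseteq> cball 0 r" and N: "N > 0" and h: "h \<noteq> 0"
  shows "admissible_field (averaged_field u N h)"
proof -
  let ?\<kappa> = "inverse (real N * norm h)" and ?c = "\<lambda>k. (real k / real N) *\<^sub>R h"
  have du: "\<And>y. (u has_derivative f' y) (at y)" and cf: "\<And>w. continuous_on UNIV (\<lambda>y. f' y w)"
    using u(1) by (auto simp: C1_def)
  note d = has_derivative_averaged_field[OF du]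
  have "norm (averaged_field u N h x) \<le> 1" for x
  proof -
    have "0 \<le> (\<Sum>k<N. u (x - ?c k))" "(\<Sum>k<N. u (x - ?c k)) \<le> real N"
      using u(2,3) sum_mono[of "{..<N}" "\<lambda>k. u (x - ?c k)" "\<lambda>_. 1"] by (auto intro: sum_nonneg)
    then have "?\<kappa> * (\<Sum>k<N. u (x - ?c k)) * norm h \<le> ?\<kappa> * real N * norm h"
      by (intro mult_right_mono mult_left_mono) auto
    also have "\<dots> = 1" using N h by (simp add: field_simps)
    finally show ?thesis using \<open>0 \<le> (\<Sum>k<N. u (x - ?c k))\<close>
      by (simp add: averaged_field_def abs_mult)
  qed
  moreover have "{x. averaged_field u N h x \<noteq> 0} \<subseteq> cball 0 (r + norm h)"
  proof
    fix x assume "x \<in> {x. averaged_field u N h x \<noteq> 0}"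
    then have "(\<Sum>k<N. u (x - ?c k)) \<noteq> 0" by (auto simp: averaged_field_def)
    then obtain k where k: "k < N" "u (x - ?c k) \<noteq> 0" by (meson sum.neutral lessThan_iff)
    then have "norm (x - ?c k) \<le> r" using uE E by fastforce
    moreover have "norm (?c k) \<le> norm h"
      using k mult_left_le_one_le[of "norm h" "real k / real N"] by simp
    ultimately have "norm x \<le> r + norm h" by (metis add_mono diff_add_cancel norm_triangle_ineq order_trans)
    then show "x \<in> cball 0 (r + norm h)" by simp
  qed
  then have "closure {x. averaged_field u N h x \<noteq> 0} \<subseteq> cball 0 (r + norm h)"
    by (intro closure_minimal) auto
  then have "compact (closure {x. averaged_field u N h x \<noteq> 0})"
    using bounded_cball bounded_subset closed_closure compact_eq_bounded_closed by blast
  moreover have "continuous_on UNIV (\<lambda>x. frechet_derivative (averaged_field u N h) (at x) i)" for i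
    unfolding frechet_derivative_at[OF d, symmetric]
    by (intro continuous_intros continuous_on_compose2[OF cf[of i]]) auto
  moreover have "averaged_field u N h differentiable (at x)" for x
    using d by (rule differentiableI)
  ultimately show ?thesis unfolding admissible_field_def by blast
qed


lemma ex_averaged_field_bound:
  fixes u :: "'a::euclidean_space \<Rightarrow> real" and E :: "'a set"
  assumes u: "C1 u f'" and E: "E \<subseteq> cball 0 r" and h: "h \<noteq> 0" and \<eta>: "\<eta> > 0"
  obtains N where "N > 0"
    "\<And>x. x \<in> E \<Longrightarrow> u x - u (x - h) \<le> norm h * divergence (averaged_field u N h) x + \<eta>"
proof -
  have du: "\<And>y. (u has_derivative f' y) (at y)" and cf: "\<And>w. continuous_on UNIV (\<lambda>y. f' y w)"
    using u by (auto simp: C1_def)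
  define K where "K = cball (0::'a) (r + norm h)"
  have "uniformly_continuous_on K (\<lambda>y. f' y h)"
    unfolding K_def by (rule compact_uniformly_continuous[OF continuous_on_subset[OF cf]]) auto
  then obtain \<delta> where \<delta>: "\<delta> > 0"
    and \<delta>': "\<And>y z. y \<in> K \<Longrightarrow> z \<in> K \<Longrightarrow> dist z y < \<delta> \<Longrightarrow> dist (f' z h) (f' y h) < \<eta>"
    unfolding uniformly_continuous_on_def using \<eta> by metis
  have uc: "\<bar>f' y h - f' z h\<bar> < \<eta>" if "y \<in> K" "z \<in> K" "dist y z < \<delta>" for y z
    using \<delta>'[OF that(2) that(1)] that(3) by (simp add: dist_real_def dist_commute abs_minus_commute)
  obtain N :: nat where N: "real N > norm h / \<delta>" using reals_Archimedean2 by blast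
  have "norm h / \<delta> > 0" using h \<delta> by simp
  then have "real N > 0" using N by linarith
  then have Npos: "N > 0" by simp
  have Nd: "norm h / real N < \<delta>" using N Npos \<delta> by (simp add: divide_less_eq mult.commute)
  have "u x - u (x - h) \<le> norm h * divergence (averaged_field u N h) x + \<eta>" if "x \<in> E" for x
  proof -
    have "x - t *\<^sub>R h \<in> K" if "0 \<le> t" "t \<le> 1" for t
    proof -
      have "norm (t *\<^sub>R h) \<le> norm h" using that by (simp add: mult_left_le_one_le)
      then show ?thesis using E \<open>x \<in> E\<close> norm_triangle_ineq4[of x "t *\<^sub>R h"] by (auto simp: K_def)
    qed
    from diff_le_riemann_sum[OF du uc this Npos Nd] show ?thesis
      using Npos h by (simp add: divergence_averaged_field[OF du] field_simps)
  qed
  with Npos show ?thesis by (rule that)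
qed

lemma set_integral_shift_diff_le_perimeter_plus:
  fixes u :: "'a::euclidean_space \<Rightarrow> real" and E :: "'a set"
  assumes u: "C1 u f'" "\<And>x. 0 \<le> u x" "\<And>x. u x \<le> 1" and uE: "\<And>x. x \<notin> E \<Longrightarrow> u x = 0"
    and E: "bounded E" "E \<in> sets borel" and per: "perimeter E \<le> ereal p"
    and h: "h \<noteq> 0" and \<eta>: "\<eta> > 0"
  shows "(LINT x:E|lborel. u x - u (x - h)) \<le> norm h * p + \<eta> * measure lborel E"
proof -
  have du: "\<And>y. (u has_derivative f' y) (at y)" and cf: "\<And>w. continuous_on UNIV (\<lambda>y. f' y w)"
    and ucont: "continuous_on UNIV u" using u(1) by (auto simp: C1_def)
  obtain r where "\<forall>x\<in>E. norm x \<le> r" using E(1) unfolding bounded_iff by blast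
  then have r: "E \<subseteq> cball 0 r" by auto
  obtain N where N: "N > 0"
    and pt: "\<And>x. x \<in> E \<Longrightarrow> u x - u (x - h) \<le> norm h * divergence (averaged_field u N h) x + \<eta>"
    using ex_averaged_field_bound[OF u(1) r h \<eta>] by blast
  let ?\<phi> = "averaged_field u N h"
  have divc: "continuous_on UNIV (divergence ?\<phi>)"
    unfolding divergence_averaged_field[OF du, abs_def]
    by (intro continuous_intros continuous_on_compose2[OF cf[of h]]) auto
  have i1: "set_integrable lborel E (\<lambda>x. u x - u (x - h))"
    by (rule set_integrable_continuous_bounded[OF _ E])
       (intro continuous_intros continuous_on_compose2[OF ucont]; auto)
  have i2: "set_integrable lborel E (divergence ?\<phi>)"
    by (rule set_integrable_continuous_bounded[OF divc E])
  have i3: "set_integrable lborel E (\<lambda>x. \<eta>)"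
    by (rule set_integrable_continuous_bounded[OF _ E]) simp
  have "(LINT x:E|lborel. u x - u (x - h)) \<le> (LINT x:E|lborel. norm h * divergence ?\<phi> x + \<eta>)"
    by (rule set_integral_mono[OF i1 _ pt])
       (intro set_integral_add set_integrable_mult_right i2 i3)
  also have "\<dots> = norm h * (LINT x:E|lborel. divergence ?\<phi> x) + \<eta> * measure lborel E"
    using set_integral_add(2)[OF set_integrable_mult_right[OF i2, of "norm h"] i3] E
      emeasure_bounded_finite[OF E(1)]
    by (simp add: set_integral_mult_right set_lebesgue_integral_def integral_indicator mult.commute)
  also have "\<dots> \<le> norm h * p + \<eta> * measure lborel E"
  proof -
    have "admissible_field ?\<phi>" by (rule admissible_averaged_field[OF u uE r N h])
    then have "(LINT x:E|lborel. divergence ?\<phi> x) \<le> p"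
      using perimeter_ge_divergence_integral[of _ E] per by (metis ereal_less_eq(3) order_trans)
    then show ?thesis by (simp add: mult_left_mono)
  qed
  finally show ?thesis .
qed

lemma set_integral_shift_diff_le_perimeter:
  fixes u :: "'a::euclidean_space \<Rightarrow> real" and E :: "'a set"
  assumes u: "C1 u f'" "\<And>x. 0 \<le> u x" "\<And>x. u x \<le> 1" and uE: "\<And>x. x \<notin> E \<Longrightarrow> u x = 0"
    and E: "bounded E" "E \<in> sets borel" and per: "perimeter E \<le> ereal p"
  shows "(LINT x:E|lborel. u x - u (x - h)) \<le> norm h * p"
proof (cases "h = 0")
  case False
  show ?thesis
  proof (rule field_le_epsilon)
    fix e :: real assume e: "e > 0"
    let ?m = "measure lborel E"
    have "(LINT x:E|lborel. u x - u (x - h)) \<le> norm h * p + (e / (?m + 1)) * ?m"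
      using set_integral_shift_diff_le_perimeter_plus[OF assms False, of "e / (?m + 1)"] e
        measure_nonneg[of lborel E] by (simp add: add_nonneg_pos)
    also have "(e / (?m + 1)) * ?m \<le> (e / (?m + 1)) * (?m + 1)"
      using e by (intro mult_left_mono) auto
    also have "\<dots> = e"
    proof -
      have "?m + 1 \<noteq> 0" using measure_nonneg[of lborel E] by linarith
      then show ?thesis by simp
    qed
    finally show "(LINT x:E|lborel. u x - u (x - h)) \<le> norm h * p + e" by simp
  qed
qed simp


lemma nn_integral_indicator_eq_set_integral:
  fixes f :: "'a::euclidean_space \<Rightarrow> real"
  assumes "set_integrable lborel E f" "\<And>x. 0 \<le> f x"
  shows "(\<integral>\<^sup>+ x. indicator E x * ennreal (f x) \<partial>lborel) = ennreal (LINT x:E|lborel. f x)"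
proof -
  have "(\<integral>\<^sup>+ x. ennreal (indicator E x * f x) \<partial>lborel) = ennreal (\<integral>x. indicator E x * f x \<partial>lborel)"
    using assms unfolding set_integrable_def by (intro nn_integral_eq_integral) auto
  moreover have "ennreal (indicator E x * f x) = indicator E x * ennreal (f x)" for x
    by (simp add: indicator_def)
  ultimately show ?thesis by (simp add: set_lebesgue_integral_def)
qed

text \<open>With \<open>u\<close> close to \<open>\<chi>\<^sub>E\<close> outside \<open>D\<close>, this bounds \<open>\<chi>\<^sub>E(x) \<chi>\<^sub>-\<^sub>E(x + h)\<close> by
  \<open>\<chi>\<^sub>E(x) u(x) - \<chi>\<^sub>E(x + h) u(x) + \<chi>\<^sub>D(x)\<close>; after a translation the middle term integrates to
  \<open>\<integral>\<^sub>E u(x - h)\<close>.\<close>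
lemma indicator_shift_out_le:
  fixes u :: "'a::euclidean_space \<Rightarrow> real"
  assumes "0 \<le> u x" "\<bar>indicator E x - u x\<bar> \<le> indicator D x"
  shows "indicator E x * indicator (- E) (x + h) + indicator E (x + h) * ennreal (u x)
    \<le> indicator E x * ennreal (u x) + indicator D x"
proof -
  have "indicator E x * indicator (- E) (x + h) + indicator E (x + h) * u x
      \<le> indicator E x * u x + (indicator D x :: real)"
    using assms by (auto simp: indicator_def split: if_splits)
  then show ?thesis using assms(1)
    by (auto simp: indicator_def ennreal_plus[symmetric] simp del: ennreal_plus intro!: ennreal_leI)
qed

lemma nn_integral_shift_out_le_perimeter:
  fixes E :: "'a::euclidean_space set"
  assumes E: "open E" "bounded E" and per: "perimeter E \<le> ereal p"
  shows "(\<integral>\<^sup>+ x. indicator E x * indicator (- E) (x + h) \<partial>lborel) \<le> ennreal (norm h * p)"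
proof (rule ennreal_le_epsilon)
  fix e :: real assume e: "e > 0"
  have Em[measurable]: "E \<in> sets borel" using E(1) by simp
  have p0: "p \<ge> 0" using perimeter_nonneg[of E] per by (metis ereal_less_eq(5) order_trans)
  obtain u f' D where u: "C1 u f'" "\<And>x. 0 \<le> u x" "\<And>x. u x \<le> 1" "\<And>x. x \<notin> E \<Longrightarrow> u x = 0"
    and D[measurable]: "D \<in> sets borel" "emeasure lborel D < ennreal e"
    and uD: "\<And>x. \<bar>indicator E x - u x\<bar> \<le> indicator D x"
    using C1_approx_indicator_open[OF E e] by blast
  have uc: "continuous_on UNIV u" using u(1) by (simp add: C1_def)
  have [measurable]: "u \<in> borel_measurable borel" using uc by (rule borel_measurable_continuous_onI)
  have si1: "set_integrable lborel E u" by (rule set_integrable_continuous_bounded[OF uc E(2) Em])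
  have si2: "set_integrable lborel E (\<lambda>x. u (x - h))"
    by (rule set_integrable_continuous_bounded[OF _ E(2) Em])
       (intro continuous_on_compose2[OF uc] continuous_intros, auto)
  define I1 where "I1 = (LINT x:E|lborel. u x)"
  define I2 where "I2 = (LINT x:E|lborel. u (x - h))"
  have I12: "I1 \<le> norm h * p + I2"
    using set_integral_shift_diff_le_perimeter[OF u E(2) Em per, of h] set_integral_diff(2)[OF si1 si2]
    unfolding I1_def I2_def by simp
  have I2pos: "I2 \<ge> 0" unfolding I2_def set_lebesgue_integral_def using u(2)
    by (intro integral_nonneg_AE AE_I2) (auto simp: indicator_def)
  have n1: "(\<integral>\<^sup>+ x. indicator E x * ennreal (u x) \<partial>lborel) = ennreal I1"
    unfolding I1_def using si1 u(2) by (rule nn_integral_indicator_eq_set_integral)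
  have n2: "(\<integral>\<^sup>+ x. indicator E (x + h) * ennreal (u x) \<partial>lborel) = ennreal I2"
    unfolding I2_def nn_integral_indicator_eq_set_integral[OF si2 u(2), symmetric]
    using nn_integral_lborel_translate[of "\<lambda>y. indicator E y * ennreal (u (y - h))" h] by simp
  let ?A = "\<integral>\<^sup>+ x. indicator E x * indicator (- E) (x + h) \<partial>lborel"
  have "?A + ennreal I2
      = (\<integral>\<^sup>+ x. indicator E x * indicator (- E) (x + h) + indicator E (x + h) * ennreal (u x) \<partial>lborel)"
    unfolding n2[symmetric] by (subst nn_integral_add) auto
  also have "\<dots> \<le> (\<integral>\<^sup>+ x. indicator E x * ennreal (u x) + indicator D x \<partial>lborel)"
    by (intro nn_integral_mono indicator_shift_out_le u(2) uD)
  also have "\<dots> = ennreal I1 + emeasure lborel D"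
    by (subst nn_integral_add) (auto simp: n1)
  also have "\<dots> \<le> ennreal (norm h * p) + ennreal I2 + ennreal e"
    using ennreal_leI[OF I12] I2pos p0 D(2) by (intro add_mono) (auto simp: ennreal_plus)
  finally show "?A \<le> ennreal (norm h * p) + ennreal e"
    by (simp add: ac_simps ennreal_add_left_cancel_le)
qed

lemma frac_perimeter_finite:
  fixes E :: "'a::euclidean_space set"
  assumes E: "open E" "bounded E" and per: "perimeter E < \<infinity>" and s: "0 < s" "s < 1"
  shows "frac_perimeter s E < \<infinity>"
proof -
  have Em[measurable]: "E \<in> sets borel" using E(1) by simp
  obtain p where pe: "perimeter E = ereal p"
    using perimeter_nonneg[of E] per by (cases "perimeter E") auto
  have p0: "p \<ge> 0" using perimeter_nonneg[of E] pe by simp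
  obtain M where M: "emeasure lborel E = ennreal M" "M \<ge> 0"
    using emeasure_bounded_finite[OF E(2)] by (metis ennreal_cases less_irrefl infinity_ennreal_def)
  define g where "g h = (\<integral>\<^sup>+ x. indicator E x * indicator (- E) (x + h) \<partial>lborel)" for h :: 'a
  have [measurable]: "g \<in> borel_measurable borel" unfolding g_def by measurable
  have gM: "g h \<le> ennreal M" for h
  proof -
    have "g h \<le> (\<integral>\<^sup>+ x. indicator E x \<partial>lborel)" unfolding g_def
      by (intro nn_integral_mono) (auto simp: indicator_def)
    then show ?thesis using M by simp
  qed
  have gC: "g h \<le> ennreal (p * norm h)" for h
    unfolding g_def using nn_integral_shift_out_le_perimeter[OF E, of p h] pe by (simp add: mult.commute)
  have "frac_perimeter s E = (\<integral>\<^sup>+ h. ennreal (norm h powr (- (real DIM('a) + s))) * g h \<partial>lborel)"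
    unfolding g_def by (rule frac_perimeter_eq_shift_integral[OF Em])
  also have "\<dots> < \<infinity>" by (rule nn_integral_frac_kernel_finite[OF _ s M(2) p0 gM gC]) simp
  finally show ?thesis .
qed


section \<open>Unions of similar copies\<close>

lemma sets_UN_image_similarity:
  fixes E :: "(real^'n) set" and I :: "nat \<Rightarrow> 'i set"
  assumes "E \<in> sets borel" "\<And>k. finite (I k)"
    and "\<And>k i. i \<in> I k \<Longrightarrow> orthogonal_matrix (R k i)" "\<And>k. \<rho> k > 0"
  shows "(\<Union>k. \<Union>i\<in>I k. similarity (R k i) (\<rho> k) (t k i) ` E) \<in> sets borel"
proof -
  have "(\<Union>i\<in>I k. similarity (R k i) (\<rho> k) (t k i) ` E) \<in> sets borel" for k
    using assms by (intro sets.finite_UN) (auto intro: sets_image_similarity)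
  then show ?thesis by (intro sets.countable_UN) auto
qed

lemma frac_perimeter_UN_similarity_finite:
  fixes E :: "(real^'n) set" and I :: "nat \<Rightarrow> 'i set"
  assumes E: "E \<in> sets borel" "frac_perimeter s E < \<infinity>" and I: "\<And>k. finite (I k)"
    and R: "\<And>k i. i \<in> I k \<Longrightarrow> orthogonal_matrix (R k i)" and \<rho>: "\<And>k. \<rho> k > 0"
    and sum: "summable (\<lambda>k. real (card (I k)) * \<rho> k powr (real CARD('n) - s))"
  shows "frac_perimeter s (\<Union>k. \<Union>i\<in>I k. similarity (R k i) (\<rho> k) (t k i) ` E) < \<infinity>"
proof -
  obtain p where p: "frac_perimeter s E = ennreal p" "p \<ge> 0"
    using E(2) by (cases "frac_perimeter s E") auto
  let ?q = "\<lambda>k. real (card (I k)) * \<rho> k powr (real CARD('n) - s) * p"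
  have "frac_perimeter s (\<Union>k. \<Union>i\<in>I k. similarity (R k i) (\<rho> k) (t k i) ` E)
      \<le> (\<Sum>k. \<Sum>i\<in>I k. frac_perimeter s (similarity (R k i) (\<rho> k) (t k i) ` E))"
    by (rule frac_perimeter_UN_le[OF I sets_image_similarity[OF R \<rho> E(1)]])
  also have "\<dots> = (\<Sum>k. ennreal (?q k))"
  proof (intro suminf_cong)
    fix k
    have "frac_perimeter s (similarity (R k i) (\<rho> k) (t k i) ` E)
        = ennreal (\<rho> k powr (real CARD('n) - s) * p)" if "i \<in> I k" for i
      using frac_perimeter_image_similarity[OF R[OF that] \<rho> E(1)] p \<rho>[of k]
      by (simp add: ennreal_mult)
    then show "(\<Sum>i\<in>I k. frac_perimeter s (similarity (R k i) (\<rho> k) (t k i) ` E)) = ennreal (?q k)"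
      using \<rho>[of k] p(2) by (simp add: ennreal_of_nat_eq_real_of_nat ennreal_mult mult.assoc)
  qed
  also have "\<dots> < \<infinity>"
  proof -
    have "(\<Sum>k. ennreal (?q k)) \<noteq> top"
      using p(2) by (intro ennreal_suminf_neq_top summable_mult2 sum) simp
    then show ?thesis by (simp add: less_top)
  qed
  finally show ?thesis .
qed

context
  fixes A B :: "(real^'n) set" and I :: "nat \<Rightarrow> 'i set" and R :: "nat \<Rightarrow> 'i \<Rightarrow> real^'n^'n"
    and \<rho> :: "nat \<Rightarrow> real" and t :: "nat \<Rightarrow> 'i \<Rightarrow> real^'n"
  assumes A: "A \<in> sets borel" and B: "B \<in> sets borel" and I: "\<And>k. finite (I k)"
    and R: "\<And>k i. i \<in> I k \<Longrightarrow> orthogonal_matrix (R k i)" and \<rho>: "\<And>k. \<rho> k > 0"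
    and null: "\<And>k i h j. i \<in> I k \<Longrightarrow> j \<in> I h \<Longrightarrow> (k, i) \<noteq> (h, j) \<Longrightarrow>
      similarity (R k i) (\<rho> k) (t k i) ` A \<inter> similarity (R h j) (\<rho> h) (t h j) ` A \<in> null_sets lborel"
begin

text \<open>Each copy of \<open>A\<close> interacts with the corresponding copy of \<open>B \<subseteq> -E\<close>, and the copies of
  \<open>A\<close> overlap only in null sets, so the scaled interactions add up below \<open>P\<^sub>s(E)\<close>.\<close>
lemma partial_sum_interaction_le_frac_perimeter:
  defines "E \<equiv> \<Union>k. \<Union>i\<in>I k. similarity (R k i) (\<rho> k) (t k i) ` A"
  assumes BE: "\<And>k i. i \<in> I k \<Longrightarrow> similarity (R k i) (\<rho> k) (t k i) ` B \<subseteq> - E"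
    and l: "l \<ge> 0" "ennreal l \<le> frac_interaction s A B"
  shows "ennreal ((\<Sum>k<N. real (card (I k)) * \<rho> k powr (real CARD('n) - s)) * l) \<le> frac_perimeter s E"
proof -
  let ?S = "\<lambda>p. similarity (R (fst p) (snd p)) (\<rho> (fst p)) (t (fst p) (snd p))"
  let ?J = "Sigma {..<N} I"
  have "(\<Sum>k<N. real (card (I k)) * \<rho> k powr (real CARD('n) - s)) * l
      = (\<Sum>k<N. \<Sum>i\<in>I k. \<rho> k powr (real CARD('n) - s) * l)"
    by (simp add: sum_distrib_right mult.assoc)
  also have "\<dots> = (\<Sum>p\<in>?J. \<rho> (fst p) powr (real CARD('n) - s) * l)"
    using I by (subst sum.Sigma) (auto simp: split_def)
  finally have "ennreal ((\<Sum>k<N. real (card (I k)) * \<rho> k powr (real CARD('n) - s)) * l)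
      = (\<Sum>p\<in>?J. ennreal (\<rho> (fst p) powr (real CARD('n) - s) * l))"
    using l by (simp add: sum_ennreal)
  also have "\<dots> \<le> (\<Sum>p\<in>?J. frac_interaction s (?S p ` A) (?S p ` B))"
  proof (intro sum_mono)
    fix p assume "p \<in> ?J"
    then have "orthogonal_matrix (R (fst p) (snd p))" using R by auto
    then show "ennreal (\<rho> (fst p) powr (real CARD('n) - s) * l) \<le> frac_interaction s (?S p ` A) (?S p ` B)"
      using frac_interaction_image_similarity[OF _ \<rho> A B] l
      by (simp add: ennreal_mult mult_left_mono)
  qed
  also have "\<dots> \<le> frac_perimeter s E"
  proof (rule sum_frac_interaction_le_frac_perimeter)
    show "E \<in> sets borel" unfolding E_def using A I R \<rho> by (rule sets_UN_image_similarity)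
    show "\<And>p q. p \<in> ?J \<Longrightarrow> q \<in> ?J \<Longrightarrow> p \<noteq> q \<Longrightarrow> ?S p ` A \<inter> ?S q ` A \<in> null_sets lborel"
      using null by (auto simp: prod_eq_iff)
    show "\<And>p. p \<in> ?J \<Longrightarrow> ?S p ` A \<in> sets borel"
      using R \<rho> A by (auto intro: sets_image_similarity)
    show "?S p ` A \<subseteq> E" if "p \<in> ?J" for p
    proof -
      have "?S p ` A \<subseteq> (\<Union>i\<in>I (fst p). similarity (R (fst p) i) (\<rho> (fst p)) (t (fst p) i) ` A)"
        using that by (intro UN_upper) auto
      also have "\<dots> \<subseteq> E" unfolding E_def by (rule UN_upper) simp
      finally show ?thesis .
    qed
    show "?S p ` B \<subseteq> - E" if "p \<in> ?J" for p
      using that by (intro BE) auto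
  qed (use I in auto)
  finally show ?thesis .
qed

lemma frac_perimeter_UN_similarity_infinite:
  defines "E \<equiv> \<Union>k. \<Union>i\<in>I k. similarity (R k i) (\<rho> k) (t k i) ` A"
  assumes BE: "\<And>k i. i \<in> I k \<Longrightarrow> similarity (R k i) (\<rho> k) (t k i) ` B \<subseteq> - E"
    and L: "frac_interaction s A B > 0"
    and sum: "\<not> summable (\<lambda>k. real (card (I k)) * \<rho> k powr (real CARD('n) - s))"
  shows "frac_perimeter s E = \<infinity>"
proof (rule ccontr)
  let ?c = "\<lambda>k. real (card (I k)) * \<rho> k powr (real CARD('n) - s)"
  assume "frac_perimeter s E \<noteq> \<infinity>"
  then obtain P where P: "frac_perimeter s E = ennreal P" "P \<ge> 0"
    by (cases "frac_perimeter s E") auto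
  obtain l where l: "l > 0" "ennreal l \<le> frac_interaction s A B"
  proof (cases "frac_interaction s A B")
    case (real r)
    then show ?thesis using L that[of r] by auto
  qed (use that[of 1] in auto)
  have "summable (\<lambda>k. ?c k * l)"
  proof (rule summableI_nonneg_bounded)
    show "(\<Sum>k<N. ?c k * l) \<le> P" for N
      using partial_sum_interaction_le_frac_perimeter[OF BE[unfolded E_def] less_imp_le[OF l(1)] l(2), of N]
        ennreal_le_iff[OF P(2)] P(1)
      by (simp add: E_def sum_distrib_right)
  qed (use l in auto)
  with sum l show False by (simp add: summable_cmult_iff[of l, symmetric] mult.commute)
qed

end

lemma summable_geometric_counts_iff:
  fixes lam x :: real and a b :: nat
  assumes lam: "lam > 1" and a: "a \<ge> 1" and b: "b \<ge> 1"
  shows "summable (\<lambda>k. real (if 1 \<le> k then a * b ^ (k - 1) else 0) * inverse (lam ^ k) powr x)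
    \<longleftrightarrow> ln (real b) / ln lam < x"
proof -
  define q where "q = lam powr (- x)"
  have q: "q > 0" using lam by (simp add: q_def)
  have pow: "inverse (lam ^ k) powr x = q ^ k" for k :: nat
    using lam by (simp add: q_def powr_realpow[symmetric] powr_powr powr_minus_divide
        powr_divide inverse_eq_divide powr_mult[symmetric] mult.commute)
  define f where "f k = real (if 1 \<le> k then a * b ^ (k - 1) else 0) * inverse (lam ^ k) powr x"
    for k :: nat
  have "(\<lambda>k. f (Suc k)) = (\<lambda>k. (real a * q) * (real b * q) ^ k)"
    unfolding f_def pow by (rule ext) (simp add: power_mult_distrib mult_ac)
  then have "summable f \<longleftrightarrow> summable (\<lambda>k. (real a * q) * (real b * q) ^ k)"
    using summable_Suc_iff[of f] by simp
  also have "\<dots> \<longleftrightarrow> real b * q < 1"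
    using a q b by (simp add: summable_cmult_iff summable_geometric_iff)
  also have "\<dots> \<longleftrightarrow> real b < lam powr x"
    using lam by (simp add: q_def powr_minus field_simps)
  also have "\<dots> \<longleftrightarrow> ln (real b) < x * ln lam"
    using lam b by (subst ln_less_cancel_iff[symmetric]) (auto simp: ln_powr)
  also have "\<dots> \<longleftrightarrow> ln (real b) / ln lam < x"
    using lam by (simp add: pos_divide_less_eq)
  finally show ?thesis unfolding f_def .
qed

lemma frac_dim_eqI:
  fixes E :: "'a::euclidean_space set"
  assumes \<sigma>: "0 < \<sigma>" "\<sigma> < 1"
    and fin: "\<And>s. 0 < s \<Longrightarrow> s < \<sigma> \<Longrightarrow> frac_perimeter s E < \<infinity>"
    and inf: "\<And>s. \<sigma> \<le> s \<Longrightarrow> s < 1 \<Longrightarrow> frac_perimeter s E = \<infinity>"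
  shows "frac_dim E = real DIM('a) - \<sigma>"
proof -
  have "{s. 0 < s \<and> s < 1 \<and> frac_perimeter s E < \<infinity>} = {0<..<\<sigma>}"
    using \<sigma> fin inf by (force simp: not_le[symmetric])
  then show ?thesis using \<sigma> by (simp add: frac_dim_def)
qed

lemma null_sets_lborel_if_lebesgue:
  "X \<in> sets borel \<Longrightarrow> emeasure lebesgue X = 0 \<Longrightarrow> X \<in> null_sets lborel"
  by (simp add: emeasure_completion main_part_sets null_sets_def)

lemma lebesgue_pos_closed_subset:
  assumes S: "S \<in> sets lebesgue" and pos: "emeasure lebesgue S > 0"
  obtains C where "closed C" "C \<subseteq> S" "emeasure lborel C > 0"
proof -
  define e where "e = (if emeasure lebesgue S = \<infinity> then 1 else enn2real (emeasure lebesgue S))"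
  have e0: "e > 0" using pos unfolding e_def
    by (auto simp: enn2real_positive_iff top.not_eq_extremum)
  have eS: "ennreal e \<le> emeasure lebesgue S" unfolding e_def by (cases "emeasure lebesgue S") auto
  from sets_lebesgue_inner_closed[OF S e0] obtain C
    where C: "closed C" "C \<subseteq> S" "S - C \<in> lmeasurable" "emeasure lebesgue (S - C) < ennreal e"
    by blast
  have Cb: "C \<in> sets borel" using C(1) by auto
  have "S = C \<union> (S - C)" using C(2) by blast
  then have "emeasure lebesgue S \<le> emeasure lebesgue C + emeasure lebesgue (S - C)"
    using C(3) Cb by (metis emeasure_subadditive fmeasurableD sets_completionI_sets sets_lborel)
  then have "emeasure lebesgue C \<noteq> 0" using C(4) eS by (metis add_0 not_le order.strict_trans1)
  then have "emeasure lborel C > 0"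
    using Cb by (simp add: emeasure_completion main_part_sets zero_less_iff_neq_zero)
  with C(1,2) show ?thesis by (rule that)
qed

lemma emeasure_lborel_open_pos:
  fixes U :: "'a::euclidean_space set"
  assumes "open U" "U \<noteq> {}"
  shows "emeasure lborel U > 0"
proof -
  obtain x where "x \<in> U" using assms(2) by blast
  then obtain r where r: "r > 0" "ball x r \<subseteq> U" using assms(1) open_contains_ball by blast
  have "0 < emeasure lborel (ball x r)" using r by (simp add: emeasure_ball)
  also have "\<dots> \<le> emeasure lborel U" using r assms(1) by (intro emeasure_mono) auto
  finally show ?thesis .
qed


lemma frac_dim_UN_similarity:
  fixes T0 B :: "(real^'n) set" and I :: "nat \<Rightarrow> 'i set" and R :: "nat \<Rightarrow> 'i \<Rightarrow> real^'n^'n"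
    and \<rho> :: "nat \<Rightarrow> real" and t :: "nat \<Rightarrow> 'i \<Rightarrow> real^'n"
  defines "E \<equiv> \<Union>k. \<Union>i\<in>I k. similarity (R k i) (\<rho> k) (t k i) ` T0"
  assumes T0: "open T0" "bounded T0" "T0 \<noteq> {}" "perimeter T0 < \<infinity>"
    and B: "B \<in> sets borel" "emeasure lborel B > 0"
    and I: "\<And>k. finite (I k)" and R: "\<And>k i. i \<in> I k \<Longrightarrow> orthogonal_matrix (R k i)"
    and \<rho>: "\<And>k. \<rho> k > 0"
    and BE: "\<And>k i. i \<in> I k \<Longrightarrow> similarity (R k i) (\<rho> k) (t k i) ` B \<subseteq> - E"
    and null: "\<And>k i h j. i \<in> I k \<Longrightarrow> j \<in> I h \<Longrightarrow> (k, i) \<noteq> (h, j) \<Longrightarrow>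
      similarity (R k i) (\<rho> k) (t k i) ` T0 \<inter> similarity (R h j) (\<rho> h) (t h j) ` T0 \<in> null_sets lborel"
    and d: "real CARD('n) - 1 < d" "d < real CARD('n)"
    and summable_iff: "\<And>s. summable (\<lambda>k. real (card (I k)) * \<rho> k powr (real CARD('n) - s))
      \<longleftrightarrow> d < real CARD('n) - s"
  shows "(\<forall>s. 0 < s \<and> s < real CARD('n) - d \<longrightarrow> frac_perimeter s E < \<infinity>)
    \<and> (\<forall>s. real CARD('n) - d \<le> s \<and> s < 1 \<longrightarrow> frac_perimeter s E = \<infinity>)
    \<and> frac_dim E = d"
proof -
  have T0b: "T0 \<in> sets borel" using T0(1) by simp
  have upper: "frac_perimeter s E < \<infinity>" if "0 < s" "s < real CARD('n) - d" for s
    unfolding E_def using that d summable_iff[of s]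
    by (intro frac_perimeter_UN_similarity_finite T0b frac_perimeter_finite[OF T0(1,2,4)] I R \<rho>) auto
  have lower: "frac_perimeter s E = \<infinity>" if "real CARD('n) - d \<le> s" for s
    unfolding E_def
  proof (rule frac_perimeter_UN_similarity_infinite[OF T0b B(1) I R \<rho> null BE[unfolded E_def]])
    show "frac_interaction s T0 B > 0"
      by (rule frac_interaction_pos[OF T0b B(1) emeasure_lborel_open_pos[OF T0(1,3)] B(2)])
    show "\<not> summable (\<lambda>k. real (card (I k)) * \<rho> k powr (real CARD('n) - s))"
      using summable_iff[of s] that by simp
  qed
  have "frac_dim E = real CARD('n) - (real CARD('n) - d)"
    using frac_dim_eqI[of "real CARD('n) - d" E] d upper lower by simp
  then show ?thesis using upper lower by simp
qed

theorem theorem3p8: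
  fixes T0 S0 :: "(real^'n) set"
    and lam :: real and a b :: nat
    and R :: "nat \<Rightarrow> nat \<Rightarrow> real^'n^'n"
    and xs :: "nat \<Rightarrow> nat \<Rightarrow> real^'n"
    and F :: "nat \<Rightarrow> nat \<Rightarrow> real^'n \<Rightarrow> real^'n"
    and T :: "(real^'n) set"
  assumes T0_open: "open T0" and T0_bounded: "bounded T0" and T0_ne: "T0 \<noteq> {}"
    and T0_per: "perimeter T0 < \<infinity>"
    and lam: "lam > 1" and a_pos: "a \<ge> 1"
    and rot: "\<And>k i. 1 \<le> k \<Longrightarrow> 1 \<le> i \<Longrightarrow> i \<le> a * b ^ (k - 1) \<Longrightarrow>
                 orthogonal_matrix (R k i) \<and> det (R k i) = 1"
    and F_def: "\<And>k i x. F k i x = R k i *v (inverse (lam ^ k) *\<^sub>R x) + xs k i"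
    and disj: "\<And>k i h j. 1 \<le> k \<Longrightarrow> 1 \<le> i \<Longrightarrow> i \<le> a * b ^ (k - 1) \<Longrightarrow>
                 1 \<le> h \<Longrightarrow> 1 \<le> j \<Longrightarrow> j \<le> a * b ^ (h - 1) \<Longrightarrow> (k, i) \<noteq> (h, j) \<Longrightarrow>
                 emeasure lebesgue (F k i ` T0 \<inter> F h j ` T0) = 0"
    and T_def: "T = (\<Union>k\<in>{1..}. \<Union>i\<in>{1..a * b ^ (k - 1)}. F k i ` T0)"
    and dimrange: "real CARD('n) - 1 < ln (real b) / ln lam"
                  "ln (real b) / ln lam < real CARD('n)"
    and S0_sub: "S0 \<subseteq> - T" and S0_meas: "S0 \<in> sets lebesgue"
    and S0_pos: "emeasure lebesgue S0 > 0"
    and S0_img: "\<And>k i. 1 \<le> k \<Longrightarrow> 1 \<le> i \<Longrightarrow> i \<le> a * b ^ (k - 1) \<Longrightarrow>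
                 F k i ` S0 \<subseteq> - T"
  shows "(\<forall>s. 0 < s \<and> s < real CARD('n) - ln (real b) / ln lam \<longrightarrow>
              frac_perimeter s T < \<infinity>)
       \<and> (\<forall>s. real CARD('n) - ln (real b) / ln lam \<le> s \<and> s < 1 \<longrightarrow>
              frac_perimeter s T = \<infinity>)
       \<and> frac_dim T = ln (real b) / ln lam"
proof -
  define I where "I k = (if 1 \<le> k then {1..a * b ^ (k - 1)} else {})" for k :: nat
  define \<rho> where "\<rho> k = inverse (lam ^ k)" for k :: nat
  have I: "finite (I k)" "i \<in> I k \<longleftrightarrow> 1 \<le> k \<and> 1 \<le> i \<and> i \<le> a * b ^ (k - 1)" for k i
    by (auto simp: I_def)
  have \<rho>: "\<rho> k > 0" for k using lam by (simp add: \<rho>_def)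
  have R: "orthogonal_matrix (R k i)" if "i \<in> I k" for k i using rot that I(2) by blast
  have F: "F k i = similarity (R k i) (\<rho> k) (xs k i)" for k i
    by (auto simp: F_def similarity_def \<rho>_def)
  have TU: "T = (\<Union>k. \<Union>i\<in>I k. F k i ` T0)"
    unfolding T_def I_def by (rule set_eqI) (simp add: Bex_def, blast)
  have b: "b \<ge> 1" using dimrange lam by (cases "b = 0") (auto simp: divide_pos_pos)
  have summable_iff: "summable (\<lambda>k. real (card (I k)) * \<rho> k powr (real CARD('n) - s))
      \<longleftrightarrow> ln (real b) / ln lam < real CARD('n) - s" for s
  proof -
    have "card (I k) = (if 1 \<le> k then a * b ^ (k - 1) else 0)" for k by (simp add: I_def)
    then show ?thesis unfolding \<rho>_def by (simp only: summable_geometric_counts_iff[OF lam a_pos b])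
  qed
  obtain S1 where S1: "closed S1" "S1 \<subseteq> S0" "emeasure lborel S1 > 0"
    using lebesgue_pos_closed_subset[OF S0_meas S0_pos] by blast
  have BE: "F k i ` S1 \<subseteq> - T" if "i \<in> I k" for k i
    using S0_img[of k i] image_mono[OF S1(2), of "F k i"] that unfolding I(2) by blast
  have null: "F k i ` T0 \<inter> F h j ` T0 \<in> null_sets lborel"
    if "i \<in> I k" "j \<in> I h" "(k, i) \<noteq> (h, j)" for k i h j
  proof (rule null_sets_lborel_if_lebesgue)
    show "F k i ` T0 \<inter> F h j ` T0 \<in> sets borel"
      unfolding F using R that T0_open \<rho> by (intro sets.Int sets_image_similarity) auto
    show "emeasure lebesgue (F k i ` T0 \<inter> F h j ` T0) = 0"
      using disj[of k i h j] that unfolding I(2) by blast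
  qed
  show ?thesis
    unfolding TU F
    by (rule frac_dim_UN_similarity[OF T0_open T0_bounded T0_ne T0_per _ S1(3) I(1) R \<rho>
          BE[unfolded TU F] null[unfolded F] dimrange summable_iff])
       (use S1(1) in simp)
qed

end
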